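(* Let $(!, \delta, \varepsilon, \Delta, \mathsf{e}, \mathsf{m},\mathsf{m}_K)$ be a monoidal coalgebra modality on an additive symmetric monoidal category $(\mathbb{X}, \otimes, K)$. Then for every object $A$, the symmetric comonoidal monad $(!(A) \otimes -, \mu^{\nabla_A}, \eta^{\mathsf{u}_A}, \mathsf{n}^{\Delta_A}, \mathsf{n}^{\mathsf{e}_A}_K)$ together with the natural transformation $\lambda_X := (\delta_A\otimes 1_{!(X)});\mathsf{m}_{!(A),X} : !(A)\otimes !(X)\to !(!(A)\otimes X)$ is an exponential lifting monad of $(!, \delta, \varepsilon, \Delta, \mathsf{e}, \mathsf{m},\mathsf{m}_K)$.
   Context: Composition is in diagrammatic order; $\alpha,\ell,\rho$ are associator and unitors and $\tau$ the interchange $(A\otimes B)\otimes(C\otimes D)\to(A\otimes C)\otimes(B\otimes D)$. An additive symmetric monoidal category is a symmetric monoidal category whose hom-sets are commutative monoids ($+$, $0$), with composition and $\otimes$ preserving sums and zeros in each argument (no negatives assumed). A monoidal coalgebra modality is a symmetric monoidal comonad $(!,\delta,\varepsilon,\mathsf{m},\mathsf{m}_K)$ ($\mathsf{m}_{A,B}:!(A)\otimes!(B)\to!(A\otimes B)$, $\mathsf{m}_K:K\to!(K)$) with natural cocommutative comonoids $(!(A),\Delta_A,\mathsf{e}_A)$ such that $\delta_A$ is a comonoid morphism and $\Delta,\mathsf{e}$ are monoidal transformations and $!$-coalgebra morphisms. Define $\nabla_A := (\delta_A\otimes\delta_A);\mathsf{m}_{!(A),!(A)};!\big(((\varepsilon_A\otimes\mathsf{e}_A);\rho_A)+((\mathsf{e}_A\otimes\varepsilon_A);\ell_A)\big):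 !(A)\otimes!(A)\to!(A)$ and $\mathsf{u}_A:=\mathsf{m}_K;!(0_{K,A}):K\to!(A)$; then $(!(A),\nabla_A,\mathsf{u}_A,\Delta_A,\mathsf{e}_A)$ is a commutative and cocommutative bimonoid and $((!(A),\delta_A),\nabla_A,\mathsf{u}_A)$ is a monoid in the category of $!$-coalgebras. The monad is $\mu_X=\alpha_{!(A),!(A),X};(\nabla_A\otimes1_X)$, $\eta_X=\ell^{-1}_X;(\mathsf{u}_A\otimes1_X)$, $\mathsf{n}_{X,Y}=(\Delta_A\otimes1_{X\otimes Y});\tau_{!(A),!(A),X,Y}$, $\mathsf{n}_K=\rho_{!(A)};\mathsf{e}_A$. An exponential lifting monad is a symmetric comonoidal monad $(\mathsf{T},\mu,\eta,\mathsf{n},\mathsf{n}_K)$ with a natural $\lambda_X:\mathsf{T}!(X)\to!\mathsf{T}(X)$ satisfying $\mu_{!(X)};\lambda_X=\mathsf{T}(\lambda_X);\lambda_{\mathsf{T}(X)};!(\mu_X)$, $\eta_{!(X)};\lambda_X=!(\eta_X)$, $\mathsf{T}(\delta_X);\lambda_{!(X)};!(\lambda_X)=\lambda_X;\delta_{\mathsf{T}(X)}$, $\lambda_X;\varepsilon_{\mathsf{T}(X)}=\mathsf{T}(\varepsilon_X)$, $\mathsf{n}_{!(X),!(Y)};(\lambda_X\otimes\lambda_Y);\mathsf{m}_{\mathsf{T}(X),\mathsf{T}(Y)}=\mathsf{T}(\mathsf{m}_{X,Y});\lambda_{X\otimes Y};!(\mathsf{n}_{X,Y})$ and $\mathsf{n}_K;\mathsf{m}_K=\mathsf{T}(\mathsf{m}_K);\lambda_K;!(\mathsf{n}_K)$.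 *)

theory Defs
  imports Main
begin

section \<open>Additive symmetric monoidal categories\<close>

text \<open>Composition cmp is written in
diagrammatic order: cmp S f g is f;g (first f, then g).
Convention for the associator (as in the paper's formula for mu):
asc S A B C : A (x) (B (x) C) -> (A (x) B) (x) C, with inverse asci.
lu S A : K (x) A -> A, ru S A : A (x) K -> A, sy S A B : A (x) B -> B (x) A.
pls is the sum of parallel arrows and zr S A B the zero arrow A -> B.\<close>

record ('o,'m) smc =
  arr  :: "'m set"
  src  :: "'m \<Rightarrow> 'o"
  trg  :: "'m \<Rightarrow> 'o"
  idm  :: "'o \<Rightarrow> 'm"
  cmp  :: "'m \<Rightarrow> 'm \<Rightarrow> 'm"
  tns  :: "'o \<Rightarrow> 'o \<Rightarrow> 'o"
  tnsm :: "'m \<Rightarrow> 'm \<Rightarrow> 'm"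
  kunit :: "'o"
  asc  :: "'o \<Rightarrow> 'o \<Rightarrow> 'o \<Rightarrow> 'm"
  asci :: "'o \<Rightarrow> 'o \<Rightarrow> 'o \<Rightarrow> 'm"
  lu   :: "'o \<Rightarrow> 'm"
  lui  :: "'o \<Rightarrow> 'm"
  ru   :: "'o \<Rightarrow> 'm"
  rui  :: "'o \<Rightarrow> 'm"
  sy   :: "'o \<Rightarrow> 'o \<Rightarrow> 'm"
  pls  :: "'m \<Rightarrow> 'm \<Rightarrow> 'm"
  zr   :: "'o \<Rightarrow> 'o \<Rightarrow> 'm"

definition hom :: "('o,'m) smc \<Rightarrow> 'o \<Rightarrow> 'o \<Rightarrow> 'm set" where
  "hom S A B = {f. f \<in> arr S \<and> src S f = A \<and> trg S f = B}"

definition is_category :: "('o,'m) smc \<Rightarrow> bool" where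
  "is_category S \<longleftrightarrow>
    (\<forall>A. idm S A \<in> hom S A A) \<and>
    (\<forall>A B C f g. f \<in> hom S A B \<longrightarrow> g \<in> hom S B C \<longrightarrow> cmp S f g \<in> hom S A C) \<and>
    (\<forall>A B f. f \<in> hom S A B \<longrightarrow> cmp S (idm S A) f = f \<and> cmp S f (idm S B) = f) \<and>
    (\<forall>A B C D f g h. f \<in> hom S A B \<longrightarrow> g \<in> hom S B C \<longrightarrow> h \<in> hom S C D \<longrightarrow>
        cmp S (cmp S f g) h = cmp S f (cmp S g h))"

definition is_monoidal :: "('o,'m) smc \<Rightarrow> bool" where
  "is_monoidal S \<longleftrightarrow>
    \<comment> \<open>tensor is a bifunctor\<close>
    (\<forall>A B C D f g. f \<in> hom S A B \<longrightarrow> g \<in> hom S C D \<longrightarrow>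
        tnsm S f g \<in> hom S (tns S A C) (tns S B D)) \<and>
    (\<forall>A B. tnsm S (idm S A) (idm S B) = idm S (tns S A B)) \<and>
    (\<forall>A B C D E F f g h k. f \<in> hom S A B \<longrightarrow> g \<in> hom S B C \<longrightarrow>
        h \<in> hom S D E \<longrightarrow> k \<in> hom S E F \<longrightarrow>
        tnsm S (cmp S f g) (cmp S h k) = cmp S (tnsm S f h) (tnsm S g k)) \<and>
    \<comment> \<open>associator: natural isomorphism\<close>
    (\<forall>A B C. asc S A B C \<in> hom S (tns S A (tns S B C)) (tns S (tns S A B) C) \<and>
             asci S A B C \<in> hom S (tns S (tns S A B) C) (tns S A (tns S B C)) \<and>
             cmp S (asc S A B C) (asci S A B C) = idm S (tns S A (tns S B C)) \<and>
             cmp S (asci S A B C) (asc S A B C) = idm S (tns S (tns S A B) C)) \<and>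
    (\<forall>A A' B B' C C' f g h. f \<in> hom S A A' \<longrightarrow> g \<in> hom S B B' \<longrightarrow> h \<in> hom S C C' \<longrightarrow>
        cmp S (tnsm S f (tnsm S g h)) (asc S A' B' C') =
        cmp S (asc S A B C) (tnsm S (tnsm S f g) h)) \<and>
    \<comment> \<open>left unitor\<close>
    (\<forall>A. lu S A \<in> hom S (tns S (kunit S) A) A \<and> lui S A \<in> hom S A (tns S (kunit S) A) \<and>
         cmp S (lu S A) (lui S A) = idm S (tns S (kunit S) A) \<and>
         cmp S (lui S A) (lu S A) = idm S A) \<and>
    (\<forall>A B f. f \<in> hom S A B \<longrightarrow>
        cmp S (tnsm S (idm S (kunit S)) f) (lu S B) = cmp S (lu S A) f) \<and>
    \<comment> \<open>right unitor\<close>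
    (\<forall>A. ru S A \<in> hom S (tns S A (kunit S)) A \<and> rui S A \<in> hom S A (tns S A (kunit S)) \<and>
         cmp S (ru S A) (rui S A) = idm S (tns S A (kunit S)) \<and>
         cmp S (rui S A) (ru S A) = idm S A) \<and>
    (\<forall>A B f. f \<in> hom S A B \<longrightarrow>
        cmp S (tnsm S f (idm S (kunit S))) (ru S B) = cmp S (ru S A) f) \<and>
    \<comment> \<open>pentagon\<close>
    (\<forall>A B C D.
        cmp S (asc S A B (tns S C D)) (asc S (tns S A B) C D) =
        cmp S (cmp S (tnsm S (idm S A) (asc S B C D)) (asc S A (tns S B C) D))
              (tnsm S (asc S A B C) (idm S D))) \<and>
    \<comment> \<open>triangle\<close>
    (\<forall>A B. cmp S (asc S A (kunit S) B) (tnsm S (ru S A) (idm S B)) =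
           tnsm S (idm S A) (lu S B))"

definition is_symmetric_monoidal :: "('o,'m) smc \<Rightarrow> bool" where
  "is_symmetric_monoidal S \<longleftrightarrow> is_category S \<and> is_monoidal S \<and>
    (\<forall>A B. sy S A B \<in> hom S (tns S A B) (tns S B A) \<and>
           cmp S (sy S A B) (sy S B A) = idm S (tns S A B)) \<and>
    (\<forall>A B C D f g. f \<in> hom S A B \<longrightarrow> g \<in> hom S C D \<longrightarrow>
        cmp S (tnsm S f g) (sy S B D) = cmp S (sy S A C) (tnsm S g f)) \<and>
    \<comment> \<open>hexagon\<close>
    (\<forall>A B C.
        cmp S (cmp S (asc S A B C) (sy S (tns S A B) C)) (asc S C A B) =
        cmp S (cmp S (tnsm S (idm S A) (sy S B C)) (asc S A C B)) (tnsm S (sy S A C) (idm S B)))"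

definition is_additive_smc :: "('o,'m) smc \<Rightarrow> bool" where
  "is_additive_smc S \<longleftrightarrow> is_symmetric_monoidal S \<and>
    \<comment> \<open>each hom-set is a commutative monoid\<close>
    (\<forall>A B f g. f \<in> hom S A B \<longrightarrow> g \<in> hom S A B \<longrightarrow> pls S f g \<in> hom S A B) \<and>
    (\<forall>A B. zr S A B \<in> hom S A B) \<and>
    (\<forall>A B f g h. f \<in> hom S A B \<longrightarrow> g \<in> hom S A B \<longrightarrow> h \<in> hom S A B \<longrightarrow>
        pls S (pls S f g) h = pls S f (pls S g h)) \<and>
    (\<forall>A B f g. f \<in> hom S A B \<longrightarrow> g \<in> hom S A B \<longrightarrow> pls S f g = pls S g f) \<and>
    (\<forall>A B f. f \<in> hom S A B \<longrightarrow> pls S (zr S A B) f = f) \<and>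
    \<comment> \<open>composition preserves sums and zeros in each argument\<close>
    (\<forall>A B C f g h. f \<in> hom S A B \<longrightarrow> g \<in> hom S A B \<longrightarrow> h \<in> hom S B C \<longrightarrow>
        cmp S (pls S f g) h = pls S (cmp S f h) (cmp S g h)) \<and>
    (\<forall>A B C f g h. h \<in> hom S A B \<longrightarrow> f \<in> hom S B C \<longrightarrow> g \<in> hom S B C \<longrightarrow>
        cmp S h (pls S f g) = pls S (cmp S h f) (cmp S h g)) \<and>
    (\<forall>A B C h. h \<in> hom S B C \<longrightarrow> cmp S (zr S A B) h = zr S A C) \<and>
    (\<forall>A B C h. h \<in> hom S A B \<longrightarrow> cmp S h (zr S B C) = zr S A C) \<and>
    \<comment> \<open>tensor preserves sums and zeros in each argument\<close>
    (\<forall>A B C D f g h. f \<in> hom S A B \<longrightarrow> g \<in> hom S A B \<longrightarrow> h \<in> hom S C D \<longrightarrow>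
        tnsm S (pls S f g) h = pls S (tnsm S f h) (tnsm S g h)) \<and>
    (\<forall>A B C D f g h. h \<in> hom S A B \<longrightarrow> f \<in> hom S C D \<longrightarrow> g \<in> hom S C D \<longrightarrow>
        tnsm S h (pls S f g) = pls S (tnsm S h f) (tnsm S h g)) \<and>
    (\<forall>A B C D h. h \<in> hom S C D \<longrightarrow>
        tnsm S (zr S A B) h = zr S (tns S A C) (tns S B D)) \<and>
    (\<forall>A B C D h. h \<in> hom S A B \<longrightarrow>
        tnsm S h (zr S C D) = zr S (tns S A C) (tns S B D))"

text \<open>The interchange tau : (A (x) B) (x) (C (x) D) -> (A (x) C) (x) (B (x) D).\<close>

definition tau :: "('o,'m) smc \<Rightarrow> 'o \<Rightarrow> 'o \<Rightarrow> 'o \<Rightarrow> 'o \<Rightarrow> 'm" where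
  "tau S A B C D =
     cmp S (cmp S (cmp S (cmp S
       (asci S A B (tns S C D))
       (tnsm S (idm S A) (asc S B C D)))
       (tnsm S (idm S A) (tnsm S (sy S B C) (idm S D))))
       (tnsm S (idm S A) (asci S C B D)))
       (asc S A C (tns S B D))"

section \<open>Monoidal coalgebra modalities\<close>

text \<open>bng/bngm: the functor !; dl: delta; ep: epsilon; mm A B: m_{A,B};
mk: m_K; dt: Delta; ce: e.\<close>

record ('o,'m) mcm =
  bng  :: "'o \<Rightarrow> 'o"
  bngm :: "'m \<Rightarrow> 'm"
  dl   :: "'o \<Rightarrow> 'm"
  ep   :: "'o \<Rightarrow> 'm"
  mm   :: "'o \<Rightarrow> 'o \<Rightarrow> 'm"
  mk   :: "'m"
  dt   :: "'o \<Rightarrow> 'm"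
  ce   :: "'o \<Rightarrow> 'm"

definition is_mcm :: "('o,'m) smc \<Rightarrow> ('o,'m) mcm \<Rightarrow> bool" where
  "is_mcm S M \<longleftrightarrow>
    (let K = kunit S; c = cmp S; t = tns S; tm = tnsm S; i = idm S; b = bng M; bm = bngm M in
    \<comment> \<open>! is a functor\<close>
    (\<forall>A B f. f \<in> hom S A B \<longrightarrow> bm f \<in> hom S (b A) (b B)) \<and>
    (\<forall>A. bm (i A) = i (b A)) \<and>
    (\<forall>A B C f g. f \<in> hom S A B \<longrightarrow> g \<in> hom S B C \<longrightarrow> bm (c f g) = c (bm f) (bm g)) \<and>
    \<comment> \<open>comonad\<close>
    (\<forall>A. dl M A \<in> hom S (b A) (b (b A)) \<and> ep M A \<in> hom S (b A) A) \<and>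
    (\<forall>A B f. f \<in> hom S A B \<longrightarrow> c (bm f) (dl M B) = c (dl M A) (bm (bm f))) \<and>
    (\<forall>A B f. f \<in> hom S A B \<longrightarrow> c (bm f) (ep M B) = c (ep M A) f) \<and>
    (\<forall>A. c (dl M A) (dl M (b A)) = c (dl M A) (bm (dl M A))) \<and>
    (\<forall>A. c (dl M A) (ep M (b A)) = i (b A)) \<and>
    (\<forall>A. c (dl M A) (bm (ep M A)) = i (b A)) \<and>
    \<comment> \<open>symmetric monoidal functor\<close>
    (\<forall>A B. mm M A B \<in> hom S (t (b A) (b B)) (b (t A B))) \<and>
    mk M \<in> hom S K (b K) \<and>
    (\<forall>A B C D f g. f \<in> hom S A B \<longrightarrow> g \<in> hom S C D \<longrightarrow>
        c (tm (bm f) (bm g)) (mm M B D) = c (mm M A C) (bm (tm f g))) \<and>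
    (\<forall>A B C. c (c (tm (i (b A)) (mm M B C)) (mm M A (t B C))) (bm (asc S A B C)) =
             c (c (asc S (b A) (b B) (b C)) (tm (mm M A B) (i (b C)))) (mm M (t A B) C)) \<and>
    (\<forall>A. c (c (tm (mk M) (i (b A))) (mm M K A)) (bm (lu S A)) = lu S (b A)) \<and>
    (\<forall>A. c (c (tm (i (b A)) (mk M)) (mm M A K)) (bm (ru S A)) = ru S (b A)) \<and>
    (\<forall>A B. c (sy S (b A) (b B)) (mm M B A) = c (mm M A B) (bm (sy S A B))) \<and>
    \<comment> \<open>delta and epsilon are monoidal transformations\<close>
    (\<forall>A B. c (mm M A B) (dl M (t A B)) =
           c (c (tm (dl M A) (dl M B)) (mm M (b A) (b B))) (bm (mm M A B))) \<and>
    c (mk M) (dl M K) = c (mk M) (bm (mk M)) \<and>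
    (\<forall>A B. c (mm M A B) (ep M (t A B)) = tm (ep M A) (ep M B)) \<and>
    c (mk M) (ep M K) = i K \<and>
    \<comment> \<open>natural cocommutative comonoids\<close>
    (\<forall>A. dt M A \<in> hom S (b A) (t (b A) (b A)) \<and> ce M A \<in> hom S (b A) K) \<and>
    (\<forall>A B f. f \<in> hom S A B \<longrightarrow> c (bm f) (dt M B) = c (dt M A) (tm (bm f) (bm f))) \<and>
    (\<forall>A B f. f \<in> hom S A B \<longrightarrow> c (bm f) (ce M B) = ce M A) \<and>
    (\<forall>A. c (c (dt M A) (tm (i (b A)) (dt M A))) (asc S (b A) (b A) (b A)) =
         c (dt M A) (tm (dt M A) (i (b A)))) \<and>
    (\<forall>A. c (c (dt M A) (tm (ce M A) (i (b A)))) (lu S (b A)) = i (b A)) \<and>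
    (\<forall>A. c (c (dt M A) (tm (i (b A)) (ce M A))) (ru S (b A)) = i (b A)) \<and>
    (\<forall>A. c (dt M A) (sy S (b A) (b A)) = dt M A) \<and>
    \<comment> \<open>delta is a comonoid morphism\<close>
    (\<forall>A. c (dl M A) (dt M (b A)) = c (dt M A) (tm (dl M A) (dl M A))) \<and>
    (\<forall>A. c (dl M A) (ce M (b A)) = ce M A) \<and>
    \<comment> \<open>Delta and e are monoidal transformations\<close>
    (\<forall>A B. c (mm M A B) (dt M (t A B)) =
           c (c (tm (dt M A) (dt M B)) (tau S (b A) (b A) (b B) (b B)))
             (tm (mm M A B) (mm M A B))) \<and>
    c (mk M) (dt M K) = c (lui S K) (tm (mk M) (mk M)) \<and>
    (\<forall>A B. c (mm M A B) (ce M (t A B)) = c (tm (ce M A) (ce M B)) (lu S K)) \<and>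
    c (mk M) (ce M K) = i K \<and>
    \<comment> \<open>Delta and e are !-coalgebra morphisms\<close>
    (\<forall>A. c (dt M A) (c (tm (dl M A) (dl M A)) (mm M (b A) (b A))) = c (dl M A) (bm (dt M A))) \<and>
    (\<forall>A. c (ce M A) (mk M) = c (dl M A) (bm (ce M A))))"

section \<open>Symmetric comonoidal monads and exponential lifting monads\<close>

text \<open>Data of a monad T with comonoidal structure n, n_K and a lifting lambda.
nn X Y : T(X (x) Y) -> T X (x) T Y; nk : T K -> K; lam X : T(!X) -> !(T X).\<close>

record ('o,'m) elm =
  To  :: "'o \<Rightarrow> 'o"
  Tm  :: "'m \<Rightarrow> 'm"
  mu  :: "'o \<Rightarrow> 'm"
  eta :: "'o \<Rightarrow> 'm"
  nn  :: "'o \<Rightarrow> 'o \<Rightarrow> 'm"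
  nk  :: "'m"
  lam :: "'o \<Rightarrow> 'm"

definition is_sym_comonoidal_monad :: "('o,'m) smc \<Rightarrow> ('o,'m) elm \<Rightarrow> bool" where
  "is_sym_comonoidal_monad S T \<longleftrightarrow>
    (let K = kunit S; c = cmp S; t = tns S; tm = tnsm S; i = idm S; T0 = To T; T1 = Tm T in
    \<comment> \<open>functor\<close>
    (\<forall>A B f. f \<in> hom S A B \<longrightarrow> T1 f \<in> hom S (T0 A) (T0 B)) \<and>
    (\<forall>A. T1 (i A) = i (T0 A)) \<and>
    (\<forall>A B C f g. f \<in> hom S A B \<longrightarrow> g \<in> hom S B C \<longrightarrow> T1 (c f g) = c (T1 f) (T1 g)) \<and>
    \<comment> \<open>monad\<close>
    (\<forall>A. mu T A \<in> hom S (T0 (T0 A)) (T0 A) \<and> eta T A \<in> hom S A (T0 A)) \<and>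
    (\<forall>A B f. f \<in> hom S A B \<longrightarrow> c (T1 (T1 f)) (mu T B) = c (mu T A) (T1 f)) \<and>
    (\<forall>A B f. f \<in> hom S A B \<longrightarrow> c f (eta T B) = c (eta T A) (T1 f)) \<and>
    (\<forall>A. c (mu T (T0 A)) (mu T A) = c (T1 (mu T A)) (mu T A)) \<and>
    (\<forall>A. c (eta T (T0 A)) (mu T A) = i (T0 A)) \<and>
    (\<forall>A. c (T1 (eta T A)) (mu T A) = i (T0 A)) \<and>
    \<comment> \<open>symmetric comonoidal functor\<close>
    (\<forall>A B. nn T A B \<in> hom S (T0 (t A B)) (t (T0 A) (T0 B))) \<and>
    nk T \<in> hom S (T0 K) K \<and>
    (\<forall>A B C D f g. f \<in> hom S A B \<longrightarrow> g \<in> hom S C D \<longrightarrow>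
        c (T1 (tm f g)) (nn T B D) = c (nn T A C) (tm (T1 f) (T1 g))) \<and>
    (\<forall>A B C. c (c (T1 (asc S A B C)) (nn T (t A B) C)) (tm (nn T A B) (i (T0 C))) =
             c (c (nn T A (t B C)) (tm (i (T0 A)) (nn T B C))) (asc S (T0 A) (T0 B) (T0 C))) \<and>
    (\<forall>A. c (c (nn T K A) (tm (nk T) (i (T0 A)))) (lu S (T0 A)) = T1 (lu S A)) \<and>
    (\<forall>A. c (c (nn T A K) (tm (i (T0 A)) (nk T))) (ru S (T0 A)) = T1 (ru S A)) \<and>
    (\<forall>A B. c (nn T A B) (sy S (T0 A) (T0 B)) = c (T1 (sy S A B)) (nn T B A)) \<and>
    \<comment> \<open>mu and eta are comonoidal transformations\<close>
    (\<forall>A B. c (mu T (t A B)) (nn T A B) =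
           c (c (T1 (nn T A B)) (nn T (T0 A) (T0 B))) (tm (mu T A) (mu T B))) \<and>
    c (mu T K) (nk T) = c (T1 (nk T)) (nk T) \<and>
    (\<forall>A B. c (eta T (t A B)) (nn T A B) = tm (eta T A) (eta T B)) \<and>
    c (eta T K) (nk T) = i K)"

definition is_exp_lifting_monad :: "('o,'m) smc \<Rightarrow> ('o,'m) mcm \<Rightarrow> ('o,'m) elm \<Rightarrow> bool" where
  "is_exp_lifting_monad S M T \<longleftrightarrow> is_sym_comonoidal_monad S T \<and>
    (let K = kunit S; c = cmp S; tm = tnsm S; b = bng M; bm = bngm M; T0 = To T; T1 = Tm T in
    (\<forall>X. lam T X \<in> hom S (T0 (b X)) (b (T0 X))) \<and>
    (\<forall>X Y f. f \<in> hom S X Y \<longrightarrow> c (T1 (bm f)) (lam T Y) = c (lam T X) (bm (T1 f))) \<and>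
    (\<forall>X. c (mu T (b X)) (lam T X) = c (c (T1 (lam T X)) (lam T (T0 X))) (bm (mu T X))) \<and>
    (\<forall>X. c (eta T (b X)) (lam T X) = bm (eta T X)) \<and>
    (\<forall>X. c (c (T1 (dl M X)) (lam T (b X))) (bm (lam T X)) = c (lam T X) (dl M (T0 X))) \<and>
    (\<forall>X. c (lam T X) (ep M (T0 X)) = T1 (ep M X)) \<and>
    (\<forall>X Y. c (c (nn T (b X) (b Y)) (tm (lam T X) (lam T Y))) (mm M (T0 X) (T0 Y)) =
           c (c (T1 (mm M X Y)) (lam T (tns S X Y))) (bm (nn T X Y))) \<and>
    c (nk T) (mk M) = c (c (T1 (mk M)) (lam T K)) (bm (nk T)))"

definition nabla :: "('o,'m) smc \<Rightarrow> ('o,'m) mcm \<Rightarrow> 'o \<Rightarrow> 'm" where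
  "nabla S M A =
     cmp S (cmp S (tnsm S (dl M A) (dl M A)) (mm M (bng M A) (bng M A)))
       (bngm M (pls S (cmp S (tnsm S (ep M A) (ce M A)) (ru S A))
                      (cmp S (tnsm S (ce M A) (ep M A)) (lu S A))))"

definition uu :: "('o,'m) smc \<Rightarrow> ('o,'m) mcm \<Rightarrow> 'o \<Rightarrow> 'm" where
  "uu S M A = cmp S (mk M) (bngm M (zr S (kunit S) A))"

definition bang_monad :: "('o,'m) smc \<Rightarrow> ('o,'m) mcm \<Rightarrow> 'o \<Rightarrow> ('o,'m) elm" where
  "bang_monad S M A =
    \<lparr> To = (\<lambda>X. tns S (bng M A) X),
      Tm = (\<lambda>f. tnsm S (idm S (bng M A)) f),
      mu = (\<lambda>X. cmp S (asc S (bng M A) (bng M A) X) (tnsm S (nabla S M A) (idm S X))),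
      eta = (\<lambda>X. cmp S (lui S X) (tnsm S (uu S M A) (idm S X))),
      nn = (\<lambda>X Y. cmp S (tnsm S (dt M A) (idm S (tns S X Y))) (tau S (bng M A) (bng M A) X Y)),
      nk = cmp S (ru S (bng M A)) (ce M A),
      lam = (\<lambda>X. cmp S (tnsm S (dl M A) (idm S (bng M X))) (mm M (bng M A) X)) \<rparr>"

end

theory Submission
  imports Defs
begin

(*
  The monad !A \<otimes> - comes from the bimonoid structure of !A.  Its multiplication
  \<nabla> = (\<delta> \<otimes> \<delta>);m;!\<phi>, where \<phi> = (\<epsilon> \<otimes> e);r + (e \<otimes> \<epsilon>);l with unitors l and r, is a morphism
  of !-coalgebras, so associativity and unitality of \<nabla> can be pushed under ! and reduce,
  by naturality and associativity of m, to the corresponding identities for \<phi>.  These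
  hold because composition and tensor distribute over sums and u;\<epsilon> = 0.  The comonoidal
  structure is induced by \<Delta> through the interchange \<tau>, whose compatibility with
  associators, unitors and symmetry follows from the pentagon, triangle and hexagon
  axioms.  The lifting (\<delta> \<otimes> 1);m satisfies its axioms because \<delta> and \<epsilon> are monoidal,
  m is natural and associative, and \<Delta> and e are coalgebra morphisms.
*)

locale additive_smc =
  fixes S :: "('o,'m) smc"
  assumes add: "is_additive_smc S"
begin

abbreviation Ar where "Ar f \<equiv> f \<in> arr S"
abbreviation sr where "sr f \<equiv> src S f"
abbreviation tg where "tg f \<equiv> trg S f"
abbreviation raw_comp (infixr "\<bullet>" 55) where "f \<bullet> g \<equiv> cmp S f g"
abbreviation raw_tensor (infixr "\<circledast>" 65) where "f \<circledast> g \<equiv> tnsm S f g"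
abbreviation obj_tensor (infixr "\<odot>" 65) where "X \<odot> Y \<equiv> tns S X Y"
abbreviation i where "i X \<equiv> idm S X"
abbreviation K where "K \<equiv> kunit S"
abbreviation a where "a X Y Z \<equiv> asc S X Y Z"
abbreviation ai where "ai X Y Z \<equiv> asci S X Y Z"
abbreviation l where "l X \<equiv> lu S X"
abbreviation li where "li X \<equiv> lui S X"
abbreviation r where "r X \<equiv> ru S X"
abbreviation ri where "ri X \<equiv> rui S X"
abbreviation s where "s X Y \<equiv> sy S X Y"
abbreviation raw_plus (infixl "\<uplus>" 60) where "f \<uplus> g \<equiv> pls S f g"
abbreviation z where "z X Y \<equiv> zr S X Y"

lemma category: "is_category S"
  and monoidal: "is_monoidal S"
  and symmetric_monoidal: "is_symmetric_monoidal S"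
  using add unfolding is_additive_smc_def is_symmetric_monoidal_def by auto

lemma hom_iff: "f \<in> hom S A B \<longleftrightarrow> Ar f \<and> sr f = A \<and> tg f = B"
  by (simp add: hom_def)

lemma idm_ty[simp]: "Ar (i A)" "sr (i A) = A" "tg (i A) = A"
  using category unfolding is_category_def hom_iff by auto

lemma cmp_ty:
  assumes "Ar f" "Ar g" "tg f = sr g"
  shows "Ar (f \<bullet> g)" "sr (f \<bullet> g) = sr f" "tg (f \<bullet> g) = tg g"
proof -
  have "f \<in> hom S (sr f) (tg f)" "g \<in> hom S (tg f) (tg g)" using assms by (auto simp: hom_iff)
  then have "f \<bullet> g \<in> hom S (sr f) (tg g)" using category unfolding is_category_def by blast
  then show "Ar (f \<bullet> g)" "sr (f \<bullet> g) = sr f" "tg (f \<bullet> g) = tg g" by (auto simp: hom_iff)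
qed

lemma idl_raw: "Ar f \<Longrightarrow> sr f = A \<Longrightarrow> i A \<bullet> f = f"
  using category unfolding is_category_def hom_iff by blast

lemma idr_raw: "Ar f \<Longrightarrow> tg f = A \<Longrightarrow> f \<bullet> i A = f"
  using category unfolding is_category_def hom_iff by blast

lemma assoc_raw:
  "Ar f \<Longrightarrow> Ar g \<Longrightarrow> Ar h \<Longrightarrow> tg f = sr g \<Longrightarrow> tg g = sr h \<Longrightarrow> (f \<bullet> g) \<bullet> h = f \<bullet> (g \<bullet> h)"
  using category unfolding is_category_def hom_iff by metis

lemma tnsm_ty:
  assumes "Ar f" "Ar g"
  shows "Ar (f \<circledast> g)" "sr (f \<circledast> g) = sr f \<odot> sr g" "tg (f \<circledast> g) = tg f \<odot> tg g"
proof -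
  have "f \<in> hom S (sr f) (tg f)" "g \<in> hom S (sr g) (tg g)" using assms by (auto simp: hom_iff)
  moreover have "\<forall>A B C D f g. f \<in> hom S A B \<longrightarrow> g \<in> hom S C D \<longrightarrow>
        tnsm S f g \<in> hom S (tns S A C) (tns S B D)" using monoidal unfolding is_monoidal_def by (elim conjE)
  ultimately have "f \<circledast> g \<in> hom S (sr f \<odot> sr g) (tg f \<odot> tg g)" by blast
  then show "Ar (f \<circledast> g)" "sr (f \<circledast> g) = sr f \<odot> sr g" "tg (f \<circledast> g) = tg f \<odot> tg g" by (auto simp: hom_iff)
qed

lemma tnsm_idm: "i A \<circledast> i B = i (A \<odot> B)"
proof -
  have "\<forall>A B. tnsm S (idm S A) (idm S B) = idm S (tns S A B)" using monoidal unfolding is_monoidal_def by (elim conjE)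
  then show ?thesis by blast
qed

lemma interchange_raw:
  "Ar f \<Longrightarrow> Ar g \<Longrightarrow> Ar h \<Longrightarrow> Ar k \<Longrightarrow> tg f = sr g \<Longrightarrow> tg h = sr k \<Longrightarrow>
   (f \<bullet> g) \<circledast> (h \<bullet> k) = (f \<circledast> h) \<bullet> (g \<circledast> k)"
  using monoidal unfolding is_monoidal_def hom_iff by metis

lemma asc_ty[simp]: "Ar (a X Y Z)" "sr (a X Y Z) = X \<odot> (Y \<odot> Z)" "tg (a X Y Z) = (X \<odot> Y) \<odot> Z"
    "Ar (ai X Y Z)" "sr (ai X Y Z) = (X \<odot> Y) \<odot> Z" "tg (ai X Y Z) = X \<odot> (Y \<odot> Z)"
  using monoidal unfolding is_monoidal_def hom_iff by auto

lemma asc_inv_raw: "a X Y Z \<bullet> ai X Y Z = i (X \<odot> (Y \<odot> Z))" "ai X Y Z \<bullet> a X Y Z = i ((X \<odot> Y) \<odot> Z)"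
  using monoidal unfolding is_monoidal_def hom_iff by auto

lemma asc_nat_raw:
  "Ar f \<Longrightarrow> Ar g \<Longrightarrow> Ar h \<Longrightarrow> tg f = A' \<Longrightarrow> tg g = B' \<Longrightarrow> tg h = C' \<Longrightarrow>
   (f \<circledast> (g \<circledast> h)) \<bullet> a A' B' C' = a (sr f) (sr g) (sr h) \<bullet> ((f \<circledast> g) \<circledast> h)"
  using monoidal unfolding is_monoidal_def hom_iff by metis

lemma lu_ty[simp]: "Ar (l X)" "sr (l X) = K \<odot> X" "tg (l X) = X"
    "Ar (li X)" "sr (li X) = X" "tg (li X) = K \<odot> X"
  using monoidal unfolding is_monoidal_def hom_iff by auto

lemma lu_inv_raw: "l X \<bullet> li X = i (K \<odot> X)" "li X \<bullet> l X = i X"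
  using monoidal unfolding is_monoidal_def hom_iff by auto

lemma lu_nat_raw: "Ar f \<Longrightarrow> tg f = B \<Longrightarrow> (i K \<circledast> f) \<bullet> l B = l (sr f) \<bullet> f"
  using monoidal unfolding is_monoidal_def hom_iff by metis

lemma ru_ty[simp]: "Ar (r X)" "sr (r X) = X \<odot> K" "tg (r X) = X"
    "Ar (ri X)" "sr (ri X) = X" "tg (ri X) = X \<odot> K"
  using monoidal unfolding is_monoidal_def hom_iff by auto

lemma ru_inv_raw: "r X \<bullet> ri X = i (X \<odot> K)" "ri X \<bullet> r X = i X"
  using monoidal unfolding is_monoidal_def hom_iff by auto

lemma ru_nat_raw: "Ar f \<Longrightarrow> tg f = B \<Longrightarrow> (f \<circledast> i K) \<bullet> r B = r (sr f) \<bullet> f"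
  using monoidal unfolding is_monoidal_def hom_iff by metis

lemma pentagon_raw: "a A B (C \<odot> D) \<bullet> a (A \<odot> B) C D =
   ((i A \<circledast> a B C D) \<bullet> a A (B \<odot> C) D) \<bullet> (a A B C \<circledast> i D)"
  using monoidal unfolding is_monoidal_def by blast

lemma triangle_raw: "a A K B \<bullet> (r A \<circledast> i B) = i A \<circledast> l B"
  using monoidal unfolding is_monoidal_def by blast

lemma sy_ty[simp]: "Ar (s X Y)" "sr (s X Y) = X \<odot> Y" "tg (s X Y) = Y \<odot> X"
  using symmetric_monoidal unfolding is_symmetric_monoidal_def hom_iff by auto

lemma sy_inv_raw: "s X Y \<bullet> s Y X = i (X \<odot> Y)"
  using symmetric_monoidal unfolding is_symmetric_monoidal_def hom_iff by auto

lemma sy_nat_raw: "Ar f \<Longrightarrow> Ar g \<Longrightarrow> tg f = B \<Longrightarrow> tg g = D \<Longrightarrow>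
   (f \<circledast> g) \<bullet> s B D = s (sr f) (sr g) \<bullet> (g \<circledast> f)"
  using symmetric_monoidal unfolding is_symmetric_monoidal_def hom_iff by metis

lemma hexagon_raw: "(a A B C \<bullet> s (A \<odot> B) C) \<bullet> a C A B =
    ((i A \<circledast> s B C) \<bullet> a A C B) \<bullet> (s A C \<circledast> i B)"
  using symmetric_monoidal unfolding is_symmetric_monoidal_def by blast

lemmas additive_laws = add[unfolded is_additive_smc_def]

lemma pls_ty: "Ar f \<Longrightarrow> Ar g \<Longrightarrow> sr g = sr f \<Longrightarrow> tg g = tg f \<Longrightarrow> Ar (f \<uplus> g)"
   "Ar f \<Longrightarrow> Ar g \<Longrightarrow> sr g = sr f \<Longrightarrow> tg g = tg f \<Longrightarrow> sr (f \<uplus> g) = sr f"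
   "Ar f \<Longrightarrow> Ar g \<Longrightarrow> sr g = sr f \<Longrightarrow> tg g = tg f \<Longrightarrow> tg (f \<uplus> g) = tg f"
  using additive_laws unfolding hom_iff by metis+

lemma zr_ty[simp]: "Ar (z X Y)" "sr (z X Y) = X" "tg (z X Y) = Y"
  using additive_laws unfolding hom_iff by metis+

lemma pls_zero_raw: "Ar f \<Longrightarrow> sr f = X \<Longrightarrow> tg f = Y \<Longrightarrow> z X Y \<uplus> f = f"
  using additive_laws unfolding hom_iff by metis

lemma pls_comm_raw: "Ar f \<Longrightarrow> Ar g \<Longrightarrow> sr g = sr f \<Longrightarrow> tg g = tg f \<Longrightarrow> f \<uplus> g = g \<uplus> f"
  using additive_laws unfolding hom_iff by metis

lemma pls_assoc_raw: "Ar f \<Longrightarrow> Ar g \<Longrightarrow> Ar h \<Longrightarrow> sr g = sr f \<Longrightarrow> tg g = tg f \<Longrightarrow> sr h = sr f \<Longrightarrow> tg h = tg f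
   \<Longrightarrow> (f \<uplus> g) \<uplus> h = f \<uplus> (g \<uplus> h)"
  using additive_laws unfolding hom_iff by metis

lemma cmp_pls_left_raw: "Ar f \<Longrightarrow> Ar g \<Longrightarrow> Ar h \<Longrightarrow> sr g = sr f \<Longrightarrow> tg g = tg f \<Longrightarrow> tg f = sr h \<Longrightarrow>
    (f \<uplus> g) \<bullet> h = (f \<bullet> h) \<uplus> (g \<bullet> h)"
  using additive_laws unfolding hom_iff by metis

lemma cmp_pls_right_raw: "Ar f \<Longrightarrow> Ar g \<Longrightarrow> Ar h \<Longrightarrow> sr g = sr f \<Longrightarrow> tg g = tg f \<Longrightarrow> tg h = sr f \<Longrightarrow>
    h \<bullet> (f \<uplus> g) = (h \<bullet> f) \<uplus> (h \<bullet> g)"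
  using additive_laws unfolding hom_iff by metis

lemma cmp_zero_left_raw: "Ar h \<Longrightarrow> sr h = B \<Longrightarrow> z A B \<bullet> h = z A (tg h)"
  using additive_laws unfolding hom_iff by metis

lemma cmp_zero_right_raw: "Ar h \<Longrightarrow> tg h = B \<Longrightarrow> h \<bullet> z B C = z (sr h) C"
  using additive_laws unfolding hom_iff by metis

lemma tnsm_pls_left_raw: "Ar f \<Longrightarrow> Ar g \<Longrightarrow> Ar h \<Longrightarrow> sr g = sr f \<Longrightarrow> tg g = tg f \<Longrightarrow>
    (f \<uplus> g) \<circledast> h = (f \<circledast> h) \<uplus> (g \<circledast> h)"
  using additive_laws unfolding hom_iff by metis

lemma tnsm_pls_right_raw: "Ar f \<Longrightarrow> Ar g \<Longrightarrow> Ar h \<Longrightarrow> sr g = sr f \<Longrightarrow> tg g = tg f \<Longrightarrow>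
    h \<circledast> (f \<uplus> g) = (h \<circledast> f) \<uplus> (h \<circledast> g)"
  using additive_laws unfolding hom_iff by metis

lemma tnsm_zero_left_raw: "Ar h \<Longrightarrow> z A B \<circledast> h = z (A \<odot> sr h) (B \<odot> tg h)"
  using additive_laws unfolding hom_iff by metis

lemma tnsm_zero_right_raw: "Ar h \<Longrightarrow> h \<circledast> z A B = z (sr h \<odot> A) (tg h \<odot> B)"
  using additive_laws unfolding hom_iff by metis

section \<open>Totalised composition, tensor and sum\<close>

text \<open>Composition, tensor and sum are extended to all pairs of arrows, with a zero arrow as
junk value.  Composition then is associative unconditionally, so most rewriting needs no
typing side conditions; only cancelling identities and inverses does.\<close>

definition tcomp (infixr "\<cdot>" 55) where
  "f \<cdot> g = (if Ar f \<and> Ar g \<and> tg f = sr g then f \<bullet> g else z (sr f) (tg g))"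

definition ttensor (infixr "\<otimes>" 65) where
  "f \<otimes> g = (if Ar f \<and> Ar g then f \<circledast> g else z (sr f \<odot> sr g) (tg f \<odot> tg g))"

definition tplus (infixl "\<oplus>" 60) where
  "f \<oplus> g = (if Ar f \<and> Ar g \<and> sr g = sr f \<and> tg g = tg f then f \<uplus> g else z (sr f) (tg f))"

lemma tcomp_ty[simp]: "Ar (f \<cdot> g)" "sr (f \<cdot> g) = sr f" "tg (f \<cdot> g) = tg g"
  by (auto simp: tcomp_def cmp_ty)

lemma ttensor_ty[simp]: "Ar (f \<otimes> g)" "sr (f \<otimes> g) = sr f \<odot> sr g" "tg (f \<otimes> g) = tg f \<odot> tg g"
  by (auto simp: ttensor_def tnsm_ty)

lemma tplus_ty[simp]: "Ar (f \<oplus> g)" "sr (f \<oplus> g) = sr f" "tg (f \<oplus> g) = tg f"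
  by (auto simp: tplus_def pls_ty)

lemma cmp_eq_tcomp: "Ar f \<Longrightarrow> Ar g \<Longrightarrow> tg f = sr g \<Longrightarrow> f \<bullet> g = f \<cdot> g"
  by (simp add: tcomp_def)

lemma tnsm_eq_ttensor: "Ar f \<Longrightarrow> Ar g \<Longrightarrow> f \<circledast> g = f \<otimes> g"
  by (simp add: ttensor_def)

lemma pls_eq_tplus: "Ar f \<Longrightarrow> Ar g \<Longrightarrow> sr g = sr f \<Longrightarrow> tg g = tg f \<Longrightarrow> f \<uplus> g = f \<oplus> g"
  by (simp add: tplus_def)

lemma tcomp_zero[simp]: "z A B \<cdot> h = z A (tg h)" "h \<cdot> z B C = z (sr h) C"
  by (auto simp: tcomp_def cmp_zero_left_raw cmp_zero_right_raw)

lemma ttensor_zero[simp]: "z A B \<otimes> h = z (A \<odot> sr h) (B \<odot> tg h)" "h \<otimes> z B C = z (sr h \<odot> B) (tg h \<odot> C)"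
  by (auto simp: ttensor_def tnsm_zero_left_raw tnsm_zero_right_raw)

lemma tcomp_eq: "Ar f \<Longrightarrow> Ar g \<Longrightarrow> tg f = sr g \<Longrightarrow> f \<cdot> g = f \<bullet> g"
  by (simp add: tcomp_def)

lemma tcomp_junk: "\<not> (Ar f \<and> Ar g \<and> tg f = sr g) \<Longrightarrow> f \<cdot> g = z (sr f) (tg g)"
  unfolding tcomp_def by (simp only: if_False)

lemma tcomp_assoc[simp]: "(f \<cdot> g) \<cdot> h = f \<cdot> (g \<cdot> h)"
proof (cases "Ar f \<and> Ar g \<and> Ar h \<and> tg f = sr g \<and> tg g = sr h")
  case True
  then have "f \<cdot> g = f \<bullet> g" "g \<cdot> h = g \<bullet> h" by (simp_all add: tcomp_def)
  moreover have "Ar (f \<bullet> g)" "sr (f \<bullet> g) = sr f" "tg (f \<bullet> g) = tg g" using True cmp_ty by auto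
  moreover have "Ar (g \<bullet> h)" "sr (g \<bullet> h) = sr g" "tg (g \<bullet> h) = tg h" using True cmp_ty by auto
  ultimately show ?thesis using True by (simp add: tcomp_def assoc_raw)
next
  case False
  have L: "(f \<cdot> g) \<cdot> h = z (sr f) (tg h)"
  proof (cases "Ar h \<and> tg g = sr h")
    case True
    then have e: "(f \<cdot> g) \<cdot> h = (f \<cdot> g) \<bullet> h" by (simp add: tcomp_eq)
    from False True have "f \<cdot> g = z (sr f) (tg g)" using tcomp_junk by auto
    then show ?thesis using e True cmp_zero_left_raw by simp
  next
    case False
    then show ?thesis using tcomp_junk by auto
  qed
  have R: "f \<cdot> (g \<cdot> h) = z (sr f) (tg h)"
  proof (cases "Ar f \<and> tg f = sr g")
    case True
    then have e: "f \<cdot> (g \<cdot> h) = f \<bullet> (g \<cdot> h)" by (simp add: tcomp_eq)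
    from False True have "g \<cdot> h = z (sr g) (tg h)" using tcomp_junk by auto
    then show ?thesis using e True cmp_zero_right_raw by simp
  next
    case False
    then show ?thesis using tcomp_junk by auto
  qed
  show ?thesis using L R by simp
qed

lemma idm_left[simp]: "Ar f \<Longrightarrow> sr f = A \<Longrightarrow> i A \<cdot> f = f"
  by (simp add: tcomp_def idl_raw)

lemma idm_right[simp]: "Ar f \<Longrightarrow> tg f = A \<Longrightarrow> f \<cdot> i A = f"
  by (simp add: tcomp_def idr_raw)

lemma ttensor_idm[simp]: "i A \<otimes> i B = i (A \<odot> B)"
  by (simp add: ttensor_def tnsm_idm)

lemma interchange[simp]: "tg f = sr g \<Longrightarrow> tg h = sr k \<Longrightarrow> (f \<otimes> h) \<cdot> (g \<otimes> k) = (f \<cdot> g) \<otimes> (h \<cdot> k)"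
proof (cases "Ar f \<and> Ar g \<and> Ar h \<and> Ar k")
  case True
  then show "tg f = sr g \<Longrightarrow> tg h = sr k \<Longrightarrow> ?thesis"
    by (simp add: tcomp_def ttensor_def tnsm_ty cmp_ty interchange_raw)
next
  case False
  then show "tg f = sr g \<Longrightarrow> tg h = sr k \<Longrightarrow> ?thesis"
    by (auto simp: tcomp_def ttensor_def tnsm_ty cmp_ty cmp_zero_left_raw cmp_zero_right_raw tnsm_zero_left_raw tnsm_zero_right_raw)
qed

lemma interchange_comp[simp]: "tg f = sr g \<Longrightarrow> tg h = sr k \<Longrightarrow> (f \<otimes> h) \<cdot> ((g \<otimes> k) \<cdot> x) = ((f \<cdot> g) \<otimes> (h \<cdot> k)) \<cdot> x"
  by (simp flip: tcomp_assoc)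

lemma in_context2: "f \<cdot> g = h \<Longrightarrow> f \<cdot> (g \<cdot> x) = h \<cdot> x"
  by (simp flip: tcomp_assoc)

lemma in_context3: "f \<cdot> (g \<cdot> k) = h \<Longrightarrow> f \<cdot> (g \<cdot> (k \<cdot> x)) = h \<cdot> x"
  by (simp flip: tcomp_assoc)

lemma asc_inv[simp]: "a X Y Z \<cdot> ai X Y Z = i (X \<odot> (Y \<odot> Z))" "ai X Y Z \<cdot> a X Y Z = i ((X \<odot> Y) \<odot> Z)"
  by (simp_all add: tcomp_def asc_inv_raw)

lemma asc_inv_comp[simp]: "Ar h \<Longrightarrow> sr h = X \<odot> (Y \<odot> Z) \<Longrightarrow> a X Y Z \<cdot> (ai X Y Z \<cdot> h) = h"
   "Ar h \<Longrightarrow> sr h = (X \<odot> Y) \<odot> Z \<Longrightarrow> ai X Y Z \<cdot> (a X Y Z \<cdot> h) = h"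
  by (simp_all add: in_context2)

lemma lu_inv[simp]: "l X \<cdot> li X = i (K \<odot> X)" "li X \<cdot> l X = i X"
  by (simp_all add: tcomp_def lu_inv_raw)

lemma lu_inv_comp[simp]: "Ar h \<Longrightarrow> sr h = K \<odot> X \<Longrightarrow> l X \<cdot> (li X \<cdot> h) = h"
   "Ar h \<Longrightarrow> sr h = X \<Longrightarrow> li X \<cdot> (l X \<cdot> h) = h"
  by (simp_all add: in_context2)

lemma ru_inv[simp]: "r X \<cdot> ri X = i (X \<odot> K)" "ri X \<cdot> r X = i X"
  by (simp_all add: tcomp_def ru_inv_raw)

lemma ru_inv_comp[simp]: "Ar h \<Longrightarrow> sr h = X \<odot> K \<Longrightarrow> r X \<cdot> (ri X \<cdot> h) = h"
   "Ar h \<Longrightarrow> sr h = X \<Longrightarrow> ri X \<cdot> (r X \<cdot> h) = h"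
  by (simp_all add: in_context2)

lemma sy_inv[simp]: "s X Y \<cdot> s Y X = i (X \<odot> Y)"
  by (simp add: tcomp_def sy_inv_raw)

lemma sy_inv_comp[simp]: "Ar h \<Longrightarrow> sr h = X \<odot> Y \<Longrightarrow> s X Y \<cdot> (s Y X \<cdot> h) = h"
  by (simp add: in_context2)

lemma asc_nat: "Ar f \<Longrightarrow> Ar g \<Longrightarrow> Ar h \<Longrightarrow> tg f = A' \<Longrightarrow> tg g = B' \<Longrightarrow> tg h = C' \<Longrightarrow>
   (f \<otimes> (g \<otimes> h)) \<cdot> a A' B' C' = a (sr f) (sr g) (sr h) \<cdot> ((f \<otimes> g) \<otimes> h)"
  by (simp add: tcomp_def ttensor_def tnsm_ty asc_nat_raw)

lemma asc_nat': "Ar f \<Longrightarrow> Ar g \<Longrightarrow> Ar h \<Longrightarrow> sr f = A \<Longrightarrow> sr g = B \<Longrightarrow> sr h = C \<Longrightarrow>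
   a A B C \<cdot> ((f \<otimes> g) \<otimes> h) = (f \<otimes> (g \<otimes> h)) \<cdot> a (tg f) (tg g) (tg h)"
  using asc_nat by metis

lemma asci_nat: "Ar f \<Longrightarrow> Ar g \<Longrightarrow> Ar h \<Longrightarrow> tg f = A' \<Longrightarrow> tg g = B' \<Longrightarrow> tg h = C' \<Longrightarrow>
   ((f \<otimes> g) \<otimes> h) \<cdot> ai A' B' C' = ai (sr f) (sr g) (sr h) \<cdot> (f \<otimes> (g \<otimes> h))"
proof -
  assume h: "Ar f" "Ar g" "Ar h" "tg f = A'" "tg g = B'" "tg h = C'"
  have "((f \<otimes> g) \<otimes> h) \<cdot> ai A' B' C' = ai (sr f) (sr g) (sr h) \<cdot> (a (sr f) (sr g) (sr h) \<cdot> (((f \<otimes> g) \<otimes> h) \<cdot> ai A' B' C'))"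
    by simp
  also have "\<dots> = ai (sr f) (sr g) (sr h) \<cdot> ((f \<otimes> (g \<otimes> h)) \<cdot> (a A' B' C' \<cdot> ai A' B' C'))"
    using h by (simp add: in_context2[OF asc_nat'])
  also have "\<dots> = ai (sr f) (sr g) (sr h) \<cdot> (f \<otimes> (g \<otimes> h))"
    using h by simp
  finally show ?thesis .
qed

lemma asci_nat': "Ar f \<Longrightarrow> Ar g \<Longrightarrow> Ar h \<Longrightarrow> sr f = A \<Longrightarrow> sr g = B \<Longrightarrow> sr h = C \<Longrightarrow>
   ai A B C \<cdot> (f \<otimes> (g \<otimes> h)) = ((f \<otimes> g) \<otimes> h) \<cdot> ai (tg f) (tg g) (tg h)"
  using asci_nat by metis

lemma lu_nat: "Ar f \<Longrightarrow> tg f = B \<Longrightarrow> (i K \<otimes> f) \<cdot> l B = l (sr f) \<cdot> f"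
  by (simp add: tcomp_def ttensor_def tnsm_ty lu_nat_raw)

lemma ru_nat: "Ar f \<Longrightarrow> tg f = B \<Longrightarrow> (f \<otimes> i K) \<cdot> r B = r (sr f) \<cdot> f"
  by (simp add: tcomp_def ttensor_def tnsm_ty ru_nat_raw)

lemma sy_nat: "Ar f \<Longrightarrow> Ar g \<Longrightarrow> tg f = B \<Longrightarrow> tg g = D \<Longrightarrow>
   (f \<otimes> g) \<cdot> s B D = s (sr f) (sr g) \<cdot> (g \<otimes> f)"
  by (simp add: tcomp_def ttensor_def tnsm_ty sy_nat_raw)

lemma pentagon: "a A B (C \<odot> D) \<cdot> a (A \<odot> B) C D =
   (i A \<otimes> a B C D) \<cdot> (a A (B \<odot> C) D \<cdot> (a A B C \<otimes> i D))"
  using pentagon_raw[of A B C D] by (simp add: cmp_eq_tcomp tnsm_eq_ttensor)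

lemma triangle: "a A K B \<cdot> (r A \<otimes> i B) = i A \<otimes> l B"
  using triangle_raw[of A B] by (simp add: cmp_eq_tcomp tnsm_eq_ttensor)

lemma hexagon: "a A B C \<cdot> (s (A \<odot> B) C \<cdot> a C A B) =
    (i A \<otimes> s B C) \<cdot> (a A C B \<cdot> (s A C \<otimes> i B))"
  using hexagon_raw[of A B C] by (simp add: cmp_eq_tcomp tnsm_eq_ttensor)

lemma tplus_assoc: "Ar f \<Longrightarrow> Ar g \<Longrightarrow> Ar h \<Longrightarrow> sr g = sr f \<Longrightarrow> tg g = tg f \<Longrightarrow> sr h = sr f \<Longrightarrow> tg h = tg f
   \<Longrightarrow> (f \<oplus> g) \<oplus> h = f \<oplus> (g \<oplus> h)"
  by (simp add: tplus_def pls_assoc_raw pls_ty)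

lemma tplus_zero_left: "Ar f \<Longrightarrow> sr f = X \<Longrightarrow> tg f = Y \<Longrightarrow> z X Y \<oplus> f = f"
  by (simp add: tplus_def pls_zero_raw)

lemma tplus_zero_right: "Ar f \<Longrightarrow> sr f = X \<Longrightarrow> tg f = Y \<Longrightarrow> f \<oplus> z X Y = f"
  using pls_comm_raw[of f "z X Y"] pls_zero_raw[of f X Y] by (simp add: tplus_def)

lemma tcomp_tplus_left: "Ar f \<Longrightarrow> Ar g \<Longrightarrow> Ar h \<Longrightarrow> sr g = sr f \<Longrightarrow> tg g = tg f \<Longrightarrow> tg f = sr h \<Longrightarrow>
    (f \<oplus> g) \<cdot> h = (f \<cdot> h) \<oplus> (g \<cdot> h)"
  by (simp add: tplus_def tcomp_def pls_ty cmp_ty cmp_pls_left_raw)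

lemma tcomp_tplus_right: "Ar f \<Longrightarrow> Ar g \<Longrightarrow> Ar h \<Longrightarrow> sr g = sr f \<Longrightarrow> tg g = tg f \<Longrightarrow> tg h = sr f \<Longrightarrow>
    h \<cdot> (f \<oplus> g) = (h \<cdot> f) \<oplus> (h \<cdot> g)"
  by (simp add: tplus_def tcomp_def pls_ty cmp_ty cmp_pls_right_raw)

lemma ttensor_tplus_left: "Ar f \<Longrightarrow> Ar g \<Longrightarrow> Ar h \<Longrightarrow> sr g = sr f \<Longrightarrow> tg g = tg f \<Longrightarrow>
    (f \<oplus> g) \<otimes> h = (f \<otimes> h) \<oplus> (g \<otimes> h)"
  by (simp add: tplus_def ttensor_def pls_ty tnsm_ty tnsm_pls_left_raw)

lemma ttensor_tplus_right: "Ar f \<Longrightarrow> Ar g \<Longrightarrow> Ar h \<Longrightarrow> sr g = sr f \<Longrightarrow> tg g = tg f \<Longrightarrow>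
    h \<otimes> (f \<oplus> g) = (h \<otimes> f) \<oplus> (h \<otimes> g)"
  by (simp add: tplus_def ttensor_def pls_ty tnsm_ty tnsm_pls_right_raw)

section \<open>Consequences of the coherence axioms\<close>

lemma tensor_unit_right_cancel: "f \<otimes> i K = g \<otimes> i K \<Longrightarrow> Ar f \<Longrightarrow> Ar g \<Longrightarrow> sr f = sr g \<Longrightarrow> tg f = tg g \<Longrightarrow> f = g"
proof -
  assume h: "Ar f" "Ar g" "sr f = sr g" "tg f = tg g" "f \<otimes> i K = g \<otimes> i K"
  have "\<And>f. Ar f \<Longrightarrow> f = ri (sr f) \<cdot> ((f \<otimes> i K) \<cdot> r (tg f))"
    by (simp add: ru_nat)
  from this[OF h(1)] this[OF h(2)] h show ?thesis by metis
qed

lemma tensor_unit_left_cancel: "i K \<otimes> f = i K \<otimes> g \<Longrightarrow> Ar f \<Longrightarrow> Ar g \<Longrightarrow> sr f = sr g \<Longrightarrow> tg f = tg g \<Longrightarrow> f = g"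
proof -
  assume h: "Ar f" "Ar g" "sr f = sr g" "tg f = tg g" "i K \<otimes> f = i K \<otimes> g"
  have "\<And>f. Ar f \<Longrightarrow> f = li (sr f) \<cdot> ((i K \<otimes> f) \<cdot> l (tg f))"
    by (simp add: lu_nat)
  from this[OF h(1)] this[OF h(2)] h show ?thesis by metis
qed

lemma lu_tensor: "a K A B \<cdot> (l A \<otimes> i B) = l (A \<odot> B)"
proof -
  have e1: "a K K (A\<odot>B) \<cdot> (a (K\<odot>K) A B \<cdot> ((r K \<otimes> i A) \<otimes> i B)) = (i K \<otimes> l (A\<odot>B)) \<cdot> a K A B"
    by (simp add: asc_nat' in_context2[OF triangle])
  have e2: "(i K \<otimes> a K A B) \<cdot> (a K (K\<odot>A) B \<cdot> ((a K K A \<otimes> i B) \<cdot> ((r K \<otimes> i A) \<otimes> i B)))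
     = (i K \<otimes> (a K A B \<cdot> (l A \<otimes> i B))) \<cdot> a K A B"
    by (simp add: triangle asc_nat' in_context2[OF asc_nat'])
  have "(i K \<otimes> l (A\<odot>B)) \<cdot> a K A B = (i K \<otimes> (a K A B \<cdot> (l A \<otimes> i B))) \<cdot> a K A B"
    using e1 e2 by (simp add: in_context2[OF pentagon])
  then have "((i K \<otimes> l (A\<odot>B)) \<cdot> a K A B) \<cdot> ai K A B = ((i K \<otimes> (a K A B \<cdot> (l A \<otimes> i B))) \<cdot> a K A B) \<cdot> ai K A B"
    by simp
  then have "i K \<otimes> l (A\<odot>B) = i K \<otimes> (a K A B \<cdot> (l A \<otimes> i B))"
    by simp
  then show ?thesis by (rule tensor_unit_left_cancel[symmetric]) simp_all
qed

lemma lu_tensor_inv: "ai K A B \<cdot> l (A \<odot> B) = l A \<otimes> i B"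
  by (simp flip: lu_tensor)

lemma lu_tensor_inv_comp: "Ar h \<Longrightarrow> sr h = A \<odot> B \<Longrightarrow> ai K A B \<cdot> (l (A \<odot> B) \<cdot> h) = (l A \<otimes> i B) \<cdot> h"
  by (simp add: in_context2[OF lu_tensor_inv])

lemma sy_nat': "Ar f \<Longrightarrow> Ar g \<Longrightarrow> sr f = Y \<Longrightarrow> sr g = X \<Longrightarrow> s X Y \<cdot> (f \<otimes> g) = (g \<otimes> f) \<cdot> s (tg g) (tg f)"
  using sy_nat[of g f] by simp

lemma asc_nat_right: "Ar h \<Longrightarrow> sr h = C \<Longrightarrow> a A B C \<cdot> (i (A \<odot> B) \<otimes> h) = (i A \<otimes> (i B \<otimes> h)) \<cdot> a A B (tg h)"
  using asc_nat'[of "i A" "i B" h A B C] by simp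

lemma ru_tensor: "a A B K \<cdot> r (A \<odot> B) = i A \<otimes> r B"
proof -
  have e1: "a A B (K\<odot>K) \<cdot> (a (A\<odot>B) K K \<cdot> (r (A\<odot>B) \<otimes> i K)) = (i A \<otimes> a B K K) \<cdot> (a A (B\<odot>K) K \<cdot> ((i A \<otimes> r B) \<otimes> i K))"
  proof -
    have "a A B (K\<odot>K) \<cdot> (a (A\<odot>B) K K \<cdot> (r (A\<odot>B) \<otimes> i K)) = a A B (K\<odot>K) \<cdot> (i (A\<odot>B) \<otimes> l K)"
      by (simp add: triangle)
    also have "\<dots> = (i A \<otimes> (i B \<otimes> l K)) \<cdot> a A B K" by (simp add: asc_nat_right)
    also have "\<dots> = (i A \<otimes> (a B K K \<cdot> (r B \<otimes> i K))) \<cdot> a A B K" by (simp add: triangle)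
    also have "\<dots> = (i A \<otimes> a B K K) \<cdot> ((i A \<otimes> (r B \<otimes> i K)) \<cdot> a A B K)" by simp
    also have "\<dots> = (i A \<otimes> a B K K) \<cdot> (a A (B\<odot>K) K \<cdot> ((i A \<otimes> r B) \<otimes> i K))" by (simp add: asc_nat)
    finally show ?thesis .
  qed
  have "(i A \<otimes> a B K K) \<cdot> (a A (B\<odot>K) K \<cdot> ((a A B K \<cdot> r (A\<odot>B)) \<otimes> i K)) =
        (i A \<otimes> a B K K) \<cdot> (a A (B\<odot>K) K \<cdot> ((i A \<otimes> r B) \<otimes> i K))"
    using e1 by (simp add: in_context2[OF pentagon])
  then have "ai A (B\<odot>K) K \<cdot> ((i A \<otimes> ai B K K) \<cdot> ((i A \<otimes> a B K K) \<cdot> (a A (B\<odot>K) K \<cdot> ((a A B K \<cdot> r (A\<odot>B)) \<otimes> i K)))) =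
        ai A (B\<odot>K) K \<cdot> ((i A \<otimes> ai B K K) \<cdot> ((i A \<otimes> a B K K) \<cdot> (a A (B\<odot>K) K \<cdot> ((i A \<otimes> r B) \<otimes> i K))))"
    by simp
  then have "(a A B K \<cdot> r (A\<odot>B)) \<otimes> i K = (i A \<otimes> r B) \<otimes> i K"
    by simp
  then show ?thesis by (rule tensor_unit_right_cancel) simp_all
qed

lemma ru_tensor_comp: "Ar h \<Longrightarrow> sr h = A \<odot> B \<Longrightarrow> a A B K \<cdot> (r (A \<odot> B) \<cdot> h) = (i A \<otimes> r B) \<cdot> h"
  by (simp add: in_context2[OF ru_tensor])

lemma lu_unit_eq_ru_unit: "l K = r K"
proof -
  have "(i K \<otimes> l K) \<cdot> l K = l (K \<odot> K) \<cdot> l K" by (simp add: lu_nat)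
  then have "((i K \<otimes> l K) \<cdot> l K) \<cdot> li K = (l (K \<odot> K) \<cdot> l K) \<cdot> li K" by simp
  then have K_lu_eq_lu_K: "i K \<otimes> l K = l (K \<odot> K)" by simp
  have "a K K K \<cdot> (r K \<otimes> i K) = a K K K \<cdot> (l K \<otimes> i K)" by (simp add: triangle lu_tensor K_lu_eq_lu_K)
  then have "ai K K K \<cdot> (a K K K \<cdot> (r K \<otimes> i K)) = ai K K K \<cdot> (a K K K \<cdot> (l K \<otimes> i K))" by simp
  then have "r K \<otimes> i K = l K \<otimes> i K" by simp
  then show ?thesis by (rule tensor_unit_right_cancel[symmetric]) simp_all
qed

lemma sy_unit_ru: "s K B \<cdot> r B = l B"
proof -
  have "(i K \<otimes> l B) \<cdot> s K B = (i K \<otimes> (s K B \<cdot> r B)) \<cdot> s K B"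
  proof -
    have "(i K \<otimes> l B) \<cdot> s K B = a K K B \<cdot> ((r K \<otimes> i B) \<cdot> s K B)" by (simp add: in_context2[OF triangle])
    also have "\<dots> = a K K B \<cdot> (s (K\<odot>K) B \<cdot> (i B \<otimes> r K))" by (simp add: sy_nat')
    also have "\<dots> = a K K B \<cdot> (s (K\<odot>K) B \<cdot> (a B K K \<cdot> r (B \<odot> K)))" by (simp add: ru_tensor)
    also have "\<dots> = (i K \<otimes> s K B) \<cdot> (a K B K \<cdot> ((s K B \<otimes> i K) \<cdot> r (B \<odot> K)))" by (simp add: in_context3[OF hexagon])
    also have "\<dots> = (i K \<otimes> s K B) \<cdot> (a K B K \<cdot> (r (K \<odot> B) \<cdot> s K B))" by (simp add: ru_nat)
    also have "\<dots> = (i K \<otimes> (s K B \<cdot> r B)) \<cdot> s K B" by (simp add: ru_tensor_comp)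
    finally show ?thesis .
  qed
  then have "((i K \<otimes> l B) \<cdot> s K B) \<cdot> s B K = ((i K \<otimes> (s K B \<cdot> r B)) \<cdot> s K B) \<cdot> s B K" by simp
  then have "i K \<otimes> l B = i K \<otimes> (s K B \<cdot> r B)" by simp
  then show ?thesis by (rule tensor_unit_left_cancel[symmetric]) simp_all
qed

lemma sy_unit_lu: "s B K \<cdot> l B = r B"
  by (simp flip: sy_unit_ru)

lemma pentagon_inv: "(ai A B C \<otimes> i D) \<cdot> (ai A (B\<odot>C) D \<cdot> (i A \<otimes> ai B C D)) = ai (A\<odot>B) C D \<cdot> ai A B (C\<odot>D)"
proof -
  have "(ai A B C \<otimes> i D) \<cdot> (ai A (B\<odot>C) D \<cdot> (i A \<otimes> ai B C D)) =
     (ai A B C \<otimes> i D) \<cdot> (ai A (B\<odot>C) D \<cdot> ((i A \<otimes> ai B C D) \<cdot> (a A B (C \<odot> D) \<cdot> (a (A \<odot> B) C D \<cdot> (ai (A\<odot>B) C D \<cdot> ai A B (C\<odot>D))))))"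
    by simp
  also have "\<dots> = ai (A\<odot>B) C D \<cdot> ai A B (C\<odot>D)"
    by (subst in_context2[OF pentagon]) simp
  finally show ?thesis .
qed

lemma asci_expand: "ai A B (C\<odot>D) = a (A\<odot>B) C D \<cdot> ((ai A B C \<otimes> i D) \<cdot> (ai A (B\<odot>C) D \<cdot> (i A \<otimes> ai B C D)))"
  by (simp add: pentagon_inv)

lemma asc_expand: "a (A\<odot>B) C D = ai A B (C\<odot>D) \<cdot> ((i A \<otimes> a B C D) \<cdot> (a A (B\<odot>C) D \<cdot> (a A B C \<otimes> i D)))"
  by (simp flip: pentagon)

lemma asc_nat_left: "Ar f \<Longrightarrow> tg f = A' \<Longrightarrow> (f \<otimes> i (B\<odot>C)) \<cdot> a A' B C = a (sr f) B C \<cdot> ((f \<otimes> i B) \<otimes> i C)"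
  using asc_nat[of f "i B" "i C"] by simp

lemma asci_nat_left: "Ar f \<Longrightarrow> sr f = A \<Longrightarrow> ai A B C \<cdot> (f \<otimes> i (B\<odot>C)) = ((f \<otimes> i B) \<otimes> i C) \<cdot> ai (tg f) B C"
  using asci_nat'[of f "i B" "i C"] by simp

lemma asci_nat_right: "Ar h \<Longrightarrow> tg h = C' \<Longrightarrow> (i (A\<odot>B) \<otimes> h) \<cdot> ai A B C' = ai A B (sr h) \<cdot> (i A \<otimes> (i B \<otimes> h))"
  using asci_nat[of "i A" "i B" h] by simp

section \<open>The interchange map\<close>

definition exch where "exch B C D = a B C D \<cdot> ((s B C \<otimes> i D) \<cdot> ai C B D)"

lemma exch_ty[simp]: "Ar (exch B C D)" "sr (exch B C D) = B \<odot> (C \<odot> D)" "tg (exch B C D) = C \<odot> (B \<odot> D)"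
  by (simp_all add: exch_def)

lemma exch_inv[simp]: "exch B C D \<cdot> exch C B D = i (B \<odot> (C \<odot> D))"
  by (simp add: exch_def)

lemma exch_inv_comp[simp]: "Ar h \<Longrightarrow> sr h = B \<odot> (C \<odot> D) \<Longrightarrow> exch B C D \<cdot> (exch C B D \<cdot> h) = h"
  by (simp add: in_context2[OF exch_inv] del: ttensor_idm)

lemma exch_tensor_right: "exch B C (D\<odot>E) = (i B \<otimes> a C D E) \<cdot> (a B (C\<odot>D) E \<cdot> ((exch B C D \<otimes> i E) \<cdot> (ai C (B\<odot>D) E \<cdot> (i C \<otimes> ai B D E))))"
proof -
  have "exch B C (D\<odot>E) = a B C (D\<odot>E) \<cdot> ((s B C \<otimes> i (D\<odot>E)) \<cdot> (a (C\<odot>B) D E \<cdot> ((ai C B D \<otimes> i E) \<cdot> (ai C (B\<odot>D) E \<cdot> (i C \<otimes> ai B D E)))))"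
    by (simp add: exch_def asci_expand)
  also have "\<dots> = a B C (D\<odot>E) \<cdot> (a (B\<odot>C) D E \<cdot> (((s B C \<otimes> i D) \<otimes> i E) \<cdot> ((ai C B D \<otimes> i E) \<cdot> (ai C (B\<odot>D) E \<cdot> (i C \<otimes> ai B D E)))))"
    by (simp add: in_context2[OF asc_nat_left] del: interchange_comp interchange)
  also have "\<dots> = (i B \<otimes> a C D E) \<cdot> (a B (C\<odot>D) E \<cdot> ((exch B C D \<otimes> i E) \<cdot> (ai C (B\<odot>D) E \<cdot> (i C \<otimes> ai B D E))))"
    by (simp add: in_context2[OF pentagon] exch_def)
  finally show ?thesis .
qed

lemma sy_tensor_left: "s (X\<odot>Y) Z = ai X Y Z \<cdot> ((i X \<otimes> s Y Z) \<cdot> (a X Z Y \<cdot> ((s X Z \<otimes> i Y) \<cdot> ai Z X Y)))"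
proof -
  have "s (X\<odot>Y) Z = ai X Y Z \<cdot> (a X Y Z \<cdot> (s (X\<odot>Y) Z \<cdot> (a Z X Y \<cdot> ai Z X Y)))" by simp
  also have "\<dots> = ai X Y Z \<cdot> ((i X \<otimes> s Y Z) \<cdot> (a X Z Y \<cdot> ((s X Z \<otimes> i Y) \<cdot> ai Z X Y)))"
    by (subst in_context3[OF hexagon]) simp
  finally show ?thesis .
qed

lemma sy_tensor_right: "s X (Y\<odot>Z) = a X Y Z \<cdot> ((s X Y \<otimes> i Z) \<cdot> (ai Y X Z \<cdot> ((i Y \<otimes> s X Z) \<cdot> a Y Z X)))"
proof -
  let ?R = "a X Y Z \<cdot> ((s X Y \<otimes> i Z) \<cdot> (ai Y X Z \<cdot> ((i Y \<otimes> s X Z) \<cdot> a Y Z X)))"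
  have "?R = ?R \<cdot> (s (Y\<odot>Z) X \<cdot> s X (Y\<odot>Z))" by simp
  also have "\<dots> = s X (Y\<odot>Z)" by (simp only: sy_tensor_left[of Y Z X]) simp
  finally show ?thesis by simp
qed

lemma exch_sy: "exch X Y Z \<cdot> ((i Y \<otimes> s X Z) \<cdot> a Y Z X) = s X (Y\<odot>Z)"
  by (simp add: sy_tensor_right exch_def)

lemma asc_nat_comp_left: "Ar f \<Longrightarrow> Ar g \<Longrightarrow> Ar q \<Longrightarrow> sr f = A \<Longrightarrow> sr g = B \<Longrightarrow> tg f \<odot> tg g = sr q \<Longrightarrow>
   a A B C \<cdot> (((f \<otimes> g) \<cdot> q) \<otimes> i C) = (f \<otimes> (g \<otimes> i C)) \<cdot> (a (tg f) (tg g) C \<cdot> (q \<otimes> i C))"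
proof -
  assume h: "Ar f" "Ar g" "Ar q" "sr f = A" "sr g = B" "tg f \<odot> tg g = sr q"
  have "a A B C \<cdot> (((f \<otimes> g) \<cdot> q) \<otimes> i C) = a A B C \<cdot> (((f \<otimes> g) \<otimes> i C) \<cdot> (q \<otimes> i C))"
    using h by simp
  also have "\<dots> = ((f \<otimes> (g \<otimes> i C)) \<cdot> a (tg f) (tg g) C) \<cdot> (q \<otimes> i C)"
    using h by (simp only: in_context2[OF asc_nat'] idm_ty)
  also have "\<dots> = (f \<otimes> (g \<otimes> i C)) \<cdot> (a (tg f) (tg g) C \<cdot> (q \<otimes> i C))"
    by (simp only: tcomp_assoc)
  finally show ?thesis .
qed

lemma pentagon_asc_comp: "Ar R \<Longrightarrow> Ar h \<Longrightarrow> sr R = (X\<odot>Z)\<odot>Y \<Longrightarrow> sr h = W \<Longrightarrow>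
  a X (Z\<odot>Y) W \<cdot> ((a X Z Y \<cdot> R) \<otimes> h) = (i X \<otimes> ai Z Y W) \<cdot> (a X Z (Y\<odot>W) \<cdot> (a (X\<odot>Z) Y W \<cdot> (R \<otimes> h)))"
proof -
  assume H: "Ar R" "Ar h" "sr R = (X\<odot>Z)\<odot>Y" "sr h = W"
  have "a X (Z\<odot>Y) W \<cdot> ((a X Z Y \<cdot> R) \<otimes> h) = (i X \<otimes> ai Z Y W) \<cdot> ((i X \<otimes> a Z Y W) \<cdot> (a X (Z\<odot>Y) W \<cdot> ((a X Z Y \<otimes> i W) \<cdot> (R \<otimes> h))))"
    using H by simp
  also have "\<dots> = (i X \<otimes> ai Z Y W) \<cdot> ((a X Z (Y\<odot>W) \<cdot> a (X\<odot>Z) Y W) \<cdot> (R \<otimes> h))"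
    by (simp only: in_context3[OF pentagon[symmetric]])
  also have "\<dots> = (i X \<otimes> ai Z Y W) \<cdot> (a X Z (Y\<odot>W) \<cdot> (a (X\<odot>Z) Y W \<cdot> (R \<otimes> h)))"
    by (simp only: tcomp_assoc)
  finally show ?thesis .
qed

lemma pentagon_asci_conj: "a (Z\<odot>X) Y W \<cdot> ((ai Z X Y \<otimes> i W) \<cdot> ai Z (X\<odot>Y) W) = ai Z X (Y\<odot>W) \<cdot> (i Z \<otimes> a X Y W)"
proof -
  have "a (Z\<odot>X) Y W \<cdot> ((ai Z X Y \<otimes> i W) \<cdot> ai Z (X\<odot>Y) W) = ai Z X (Y\<odot>W) \<cdot> (a Z X (Y\<odot>W) \<cdot> (a (Z\<odot>X) Y W \<cdot> ((ai Z X Y \<otimes> i W) \<cdot> ai Z (X\<odot>Y) W)))"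
    by simp
  also have "\<dots> = ai Z X (Y\<odot>W) \<cdot> (i Z \<otimes> a X Y W)"
    by (subst in_context2[OF pentagon]) simp
  finally show ?thesis .
qed

lemma exch_tensor_left: "exch (X\<odot>Y) Z W = (ai X Y (Z\<odot>W) \<cdot> ((i X \<otimes> exch Y Z W) \<cdot> (exch X Z (Y\<odot>W) \<cdot> (i Z \<otimes> a X Y W))))"
proof -
  have "exch (X\<odot>Y) Z W = (ai X Y (Z\<odot>W) \<cdot> ((i X \<otimes> a Y Z W) \<cdot> (a X (Y\<odot>Z) W \<cdot> ((((i X \<otimes> s Y Z) \<cdot> (a X Z Y \<cdot> ((s X Z \<otimes> i Y) \<cdot> ai Z X Y))) \<otimes> i W) \<cdot> ai Z (X\<odot>Y) W))))"
    by (simp add: exch_def sy_tensor_left asc_expand)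
  also have "\<dots> = (ai X Y (Z\<odot>W) \<cdot> ((i X \<otimes> (a Y Z W \<cdot> (s Y Z \<otimes> i W))) \<cdot> (a X (Z\<odot>Y) W \<cdot> (((a X Z Y \<cdot> ((s X Z \<otimes> i Y) \<cdot> ai Z X Y)) \<otimes> i W) \<cdot> ai Z (X\<odot>Y) W))))"
    by (simp add: asc_nat_comp_left in_context2[OF asc_nat_comp_left])
  also have "\<dots> = (ai X Y (Z\<odot>W) \<cdot> ((i X \<otimes> exch Y Z W) \<cdot> (a X Z (Y\<odot>W) \<cdot> (a (X\<odot>Z) Y W \<cdot> ((((s X Z \<otimes> i Y) \<cdot> ai Z X Y) \<otimes> i W) \<cdot> ai Z (X\<odot>Y) W)))))"
    by (simp add: pentagon_asc_comp in_context2[OF pentagon_asc_comp] exch_def)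
  also have "\<dots> = (ai X Y (Z\<odot>W) \<cdot> ((i X \<otimes> exch Y Z W) \<cdot> (a X Z (Y\<odot>W) \<cdot> ((s X Z \<otimes> i (Y\<odot>W)) \<cdot> (a (Z\<odot>X) Y W \<cdot> ((ai Z X Y \<otimes> i W) \<cdot> ai Z (X\<odot>Y) W))))))"
    by (simp add: asc_nat_comp_left in_context2[OF asc_nat_comp_left])
  also have "\<dots> = (ai X Y (Z\<odot>W) \<cdot> ((i X \<otimes> exch Y Z W) \<cdot> (exch X Z (Y\<odot>W) \<cdot> (i Z \<otimes> a X Y W))))"
    by (simp add: pentagon_asci_conj in_context3[OF pentagon_asci_conj] exch_def)
  finally show ?thesis .
qed

lemma pentagon_asci_comp: "Ar R \<Longrightarrow> Ar h \<Longrightarrow> sr R = Y\<odot>(X\<odot>Z) \<Longrightarrow> sr h = W \<Longrightarrow>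
  a (Y\<odot>X) Z W \<cdot> ((ai Y X Z \<cdot> R) \<otimes> h) = ai Y X (Z\<odot>W) \<cdot> ((i Y \<otimes> a X Z W) \<cdot> (a Y (X\<odot>Z) W \<cdot> (R \<otimes> h)))"
proof -
  assume H: "Ar R" "Ar h" "sr R = Y\<odot>(X\<odot>Z)" "sr h = W"
  have "a (Y\<odot>X) Z W \<cdot> ((ai Y X Z \<cdot> R) \<otimes> h) = ai Y X (Z\<odot>W) \<cdot> ((a Y X (Z\<odot>W) \<cdot> a (Y\<odot>X) Z W) \<cdot> ((ai Y X Z \<otimes> i W) \<cdot> (R \<otimes> h)))"
    using H by simp
  also have "\<dots> = ai Y X (Z\<odot>W) \<cdot> ((i Y \<otimes> a X Z W) \<cdot> (a Y (X\<odot>Z) W \<cdot> (R \<otimes> h)))"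
    using H by (simp only: pentagon) simp
  finally show ?thesis .
qed

lemma pentagon_asc_conj: "a Y (Z\<odot>X) W \<cdot> ((a Y Z X \<otimes> i W) \<cdot> ai (Y\<odot>Z) X W) = (i Y \<otimes> ai Z X W) \<cdot> a Y Z (X\<odot>W)"
proof -
  have "a Y (Z\<odot>X) W \<cdot> ((a Y Z X \<otimes> i W) \<cdot> ai (Y\<odot>Z) X W) = (i Y \<otimes> ai Z X W) \<cdot> (((i Y \<otimes> a Z X W) \<cdot> (a Y (Z\<odot>X) W \<cdot> (a Y Z X \<otimes> i W))) \<cdot> ai (Y\<odot>Z) X W)"
    by simp
  also have "\<dots> = (i Y \<otimes> ai Z X W) \<cdot> a Y Z (X\<odot>W)"
    by (simp only: pentagon[symmetric]) simp
  finally show ?thesis .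
qed

lemma exch_tensor_middle: "exch X (Y\<odot>Z) W = ((i X \<otimes> ai Y Z W) \<cdot> (exch X Y (Z\<odot>W) \<cdot> ((i Y \<otimes> exch X Z W) \<cdot> a Y Z (X\<odot>W))))"
proof -
  have "exch X (Y\<odot>Z) W = (a X (Y\<odot>Z) W \<cdot> (((a X Y Z \<cdot> ((s X Y \<otimes> i Z) \<cdot> (ai Y X Z \<cdot> ((i Y \<otimes> s X Z) \<cdot> a Y Z X)))) \<otimes> i W) \<cdot> ai (Y\<odot>Z) X W))"
    by (simp add: exch_def sy_tensor_right)
  also have "\<dots> = ((i X \<otimes> ai Y Z W) \<cdot> (a X Y (Z\<odot>W) \<cdot> (a (X\<odot>Y) Z W \<cdot> ((((s X Y \<otimes> i Z) \<cdot> (ai Y X Z \<cdot> ((i Y \<otimes> s X Z) \<cdot> a Y Z X))) \<otimes> i W) \<cdot> ai (Y\<odot>Z) X W))))"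
    by (simp add: pentagon_asc_comp in_context2[OF pentagon_asc_comp])
  also have "\<dots> = ((i X \<otimes> ai Y Z W) \<cdot> (a X Y (Z\<odot>W) \<cdot> ((s X Y \<otimes> i (Z\<odot>W)) \<cdot> (a (Y\<odot>X) Z W \<cdot> (((ai Y X Z \<cdot> ((i Y \<otimes> s X Z) \<cdot> a Y Z X)) \<otimes> i W) \<cdot> ai (Y\<odot>Z) X W)))))"
    by (simp add: asc_nat_comp_left in_context2[OF asc_nat_comp_left] exch_def)
  also have "\<dots> = ((i X \<otimes> ai Y Z W) \<cdot> (a X Y (Z\<odot>W) \<cdot> ((s X Y \<otimes> i (Z\<odot>W)) \<cdot> (ai Y X (Z\<odot>W) \<cdot> ((i Y \<otimes> a X Z W) \<cdot> (a Y (X\<odot>Z) W \<cdot> ((((i Y \<otimes> s X Z) \<cdot> a Y Z X) \<otimes> i W) \<cdot> ai (Y\<odot>Z) X W)))))))"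
    by (simp add: pentagon_asci_comp in_context2[OF pentagon_asci_comp])
  also have "\<dots> = ((i X \<otimes> ai Y Z W) \<cdot> (exch X Y (Z\<odot>W) \<cdot> ((i Y \<otimes> (a X Z W \<cdot> (s X Z \<otimes> i W))) \<cdot> (a Y (Z\<odot>X) W \<cdot> ((a Y Z X \<otimes> i W) \<cdot> ai (Y\<odot>Z) X W)))))"
    by (simp add: asc_nat_comp_left in_context2[OF asc_nat_comp_left] exch_def)
  also have "\<dots> = ((i X \<otimes> ai Y Z W) \<cdot> (exch X Y (Z\<odot>W) \<cdot> ((i Y \<otimes> exch X Z W) \<cdot> a Y Z (X\<odot>W))))"
    by (simp add: pentagon_asc_conj exch_def)
  finally show ?thesis .
qed

lemma exch_nat: "Ar f \<Longrightarrow> Ar g \<Longrightarrow> Ar h \<Longrightarrow> tg g = B' \<Longrightarrow> tg f = C' \<Longrightarrow> tg h = D' \<Longrightarrow>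
  (g \<otimes> (f \<otimes> h)) \<cdot> exch B' C' D' = exch (sr g) (sr f) (sr h) \<cdot> (f \<otimes> (g \<otimes> h))"
  by (simp add: exch_def asc_nat in_context2[OF asc_nat] sy_nat asci_nat' in_context2[OF asci_nat'])

abbreviation ta where "ta A B C D \<equiv> tau S A B C D"

lemma tau_exch: "ta A B C D = ai A B (C\<odot>D) \<cdot> ((i A \<otimes> exch B C D) \<cdot> a A C (B\<odot>D))"
  unfolding tau_def by (simp add: cmp_eq_tcomp tnsm_eq_ttensor exch_def)

lemma tau_ty[simp]: "Ar (ta A B C D)" "sr (ta A B C D) = (A\<odot>B)\<odot>(C\<odot>D)" "tg (ta A B C D) = (A\<odot>C)\<odot>(B\<odot>D)"
  by (simp_all add: tau_exch)

lemma tau_inv[simp]: "ta A B C D \<cdot> ta A C B D = i ((A\<odot>B)\<odot>(C\<odot>D))"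
  by (simp add: tau_exch)

lemma tau_inv_comp[simp]: "Ar h \<Longrightarrow> sr h = (A\<odot>B)\<odot>(C\<odot>D) \<Longrightarrow> ta A B C D \<cdot> (ta A C B D \<cdot> h) = h"
  by (simp add: in_context2[OF tau_inv] del: ttensor_idm)

lemma tau_nat: "Ar f \<Longrightarrow> Ar g \<Longrightarrow> Ar h \<Longrightarrow> Ar k \<Longrightarrow> tg f = A' \<Longrightarrow> tg g = B' \<Longrightarrow> tg h = C' \<Longrightarrow> tg k = D' \<Longrightarrow>
  ((f \<otimes> g) \<otimes> (h \<otimes> k)) \<cdot> ta A' B' C' D' = ta (sr f) (sr g) (sr h) (sr k) \<cdot> ((f \<otimes> h) \<otimes> (g \<otimes> k))"
proof -
  assume H: "Ar f" "Ar g" "Ar h" "Ar k" "tg f = A'" "tg g = B'" "tg h = C'" "tg k = D'"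
  have "((f \<otimes> g) \<otimes> (h \<otimes> k)) \<cdot> ta A' B' C' D' = ai (sr f) (sr g) (sr h \<odot> sr k) \<cdot> ((f \<otimes> (g \<otimes> (h \<otimes> k))) \<cdot> ((i A' \<otimes> exch B' C' D') \<cdot> a A' C' (B'\<odot>D')))"
    using H by (simp add: tau_exch asci_nat in_context2[OF asci_nat] del: interchange_comp interchange)
  also have "\<dots> = ai (sr f) (sr g) (sr h \<odot> sr k) \<cdot> ((f \<otimes> ((g \<otimes> (h \<otimes> k)) \<cdot> exch B' C' D')) \<cdot> a A' C' (B'\<odot>D'))"
    using H by simp
  also have "\<dots> = ai (sr f) (sr g) (sr h \<odot> sr k) \<cdot> ((f \<otimes> (exch (sr g) (sr h) (sr k) \<cdot> (h \<otimes> (g \<otimes> k)))) \<cdot> a A' C' (B'\<odot>D'))"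
    using H by (simp add: exch_nat)
  also have "\<dots> = ai (sr f) (sr g) (sr h \<odot> sr k) \<cdot> ((i (sr f) \<otimes> exch (sr g) (sr h) (sr k)) \<cdot> ((f \<otimes> (h \<otimes> (g \<otimes> k))) \<cdot> a A' C' (B'\<odot>D')))"
    using H by simp
  also have "\<dots> = ta (sr f) (sr g) (sr h) (sr k) \<cdot> ((f \<otimes> h) \<otimes> (g \<otimes> k))"
    using H by (simp add: tau_exch asc_nat del: interchange interchange_comp)
  finally show ?thesis .
qed

lemma tau_nat': "Ar f \<Longrightarrow> Ar g \<Longrightarrow> Ar h \<Longrightarrow> Ar k \<Longrightarrow> sr f = A \<Longrightarrow> sr g = B \<Longrightarrow> sr h = C \<Longrightarrow> sr k = D \<Longrightarrow>
  ta A B C D \<cdot> ((f \<otimes> h) \<otimes> (g \<otimes> k)) = ((f \<otimes> g) \<otimes> (h \<otimes> k)) \<cdot> ta (tg f) (tg g) (tg h) (tg k)"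
  using tau_nat by metis

lemma exch_tau: "(a P (B\<odot>Q) (C\<odot>R) \<cdot> ((exch P B Q \<otimes> i (C\<odot>R)) \<cdot> (ai B (P\<odot>Q) (C\<odot>R) \<cdot> ((i B \<otimes> exch (P\<odot>Q) C R) \<cdot> a B C ((P\<odot>Q)\<odot>R))))) = ((i P \<otimes> ta B Q C R) \<cdot> (exch P (B\<odot>C) (Q\<odot>R) \<cdot> (i (B\<odot>C) \<otimes> a P Q R)))"
proof -
  have "((i P \<otimes> ta B Q C R) \<cdot> (exch P (B\<odot>C) (Q\<odot>R) \<cdot> (i (B\<odot>C) \<otimes> a P Q R))) = ((i P \<otimes> ai B Q (C\<odot>R)) \<cdot> ((i P \<otimes> (i B \<otimes> exch Q C R)) \<cdot> (exch P B (C\<odot>(Q\<odot>R)) \<cdot> ((i B \<otimes> exch P C (Q\<odot>R)) \<cdot> (a B C (P\<odot>(Q\<odot>R)) \<cdot> (i (B\<odot>C) \<otimes> a P Q R))))))"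
    by (simp add: tau_exch exch_tensor_middle)
  also have "\<dots> = ((i P \<otimes> ai B Q (C\<odot>R)) \<cdot> (exch P B (Q\<odot>(C\<odot>R)) \<cdot> ((i B \<otimes> (i P \<otimes> exch Q C R)) \<cdot> ((i B \<otimes> exch P C (Q\<odot>R)) \<cdot> ((i B \<otimes> (i C \<otimes> a P Q R)) \<cdot> a B C ((P\<odot>Q)\<odot>R))))))"
    by (simp add: exch_nat in_context2[OF exch_nat] asc_nat_right del: interchange interchange_comp)
  also have "\<dots> = ((i P \<otimes> ai B Q (C\<odot>R)) \<cdot> (exch P B (Q\<odot>(C\<odot>R)) \<cdot> ((i B \<otimes> (a P Q (C\<odot>R) \<cdot> exch (P\<odot>Q) C R)) \<cdot> a B C ((P\<odot>Q)\<odot>R))))"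
    by (simp add: exch_tensor_left)
  also have "\<dots> = (a P (B\<odot>Q) (C\<odot>R) \<cdot> ((exch P B Q \<otimes> i (C\<odot>R)) \<cdot> (ai B (P\<odot>Q) (C\<odot>R) \<cdot> ((i B \<otimes> exch (P\<odot>Q) C R) \<cdot> a B C ((P\<odot>Q)\<odot>R)))))"
    by (simp add: exch_tensor_right)
  finally show ?thesis by simp
qed

lemma tau_asc: "(a (A\<odot>P) (B\<odot>Q) (C\<odot>R) \<cdot> ((ta A P B Q \<otimes> i (C\<odot>R)) \<cdot> ta (A\<odot>B) (P\<odot>Q) C R)) = ((i (A\<odot>P) \<otimes> ta B Q C R) \<cdot> (ta A P (B\<odot>C) (Q\<odot>R) \<cdot> (a A B C \<otimes> a P Q R)))"
proof -
  have "(a (A\<odot>P) (B\<odot>Q) (C\<odot>R) \<cdot> ((ta A P B Q \<otimes> i (C\<odot>R)) \<cdot> ta (A\<odot>B) (P\<odot>Q) C R)) = (a (A\<odot>P) (B\<odot>Q) (C\<odot>R) \<cdot> (((ai A P (B\<odot>Q) \<cdot> ((i A \<otimes> exch P B Q) \<cdot> a A B (P\<odot>Q))) \<otimes> i (C\<odot>R)) \<cdot> (ai (A\<odot>B) (P\<odot>Q) (C\<odot>R) \<cdot> ((i (A\<odot>B) \<otimes> exch (P\<odot>Q) C R) \<cdot> a (A\<odot>B) C ((P\<odot>Q)\<odot>R)))))"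
    by (simp add: tau_exch)
  also have "\<dots> = (ai A P ((B\<odot>Q)\<odot>(C\<odot>R)) \<cdot> ((i A \<otimes> a P (B\<odot>Q) (C\<odot>R)) \<cdot> (a A (P\<odot>(B\<odot>Q)) (C\<odot>R) \<cdot> ((((i A \<otimes> exch P B Q) \<cdot> a A B (P\<odot>Q)) \<otimes> i (C\<odot>R)) \<cdot> (ai (A\<odot>B) (P\<odot>Q) (C\<odot>R) \<cdot> ((i (A\<odot>B) \<otimes> exch (P\<odot>Q) C R) \<cdot> a (A\<odot>B) C ((P\<odot>Q)\<odot>R)))))))"
    by (simp add: pentagon_asci_comp in_context2[OF pentagon_asci_comp] del: interchange interchange_comp)
  also have "\<dots> = (ai A P ((B\<odot>Q)\<odot>(C\<odot>R)) \<cdot> ((i A \<otimes> a P (B\<odot>Q) (C\<odot>R)) \<cdot> ((i A \<otimes> (exch P B Q \<otimes> i (C\<odot>R))) \<cdot> (a A (B\<odot>(P\<odot>Q)) (C\<odot>R) \<cdot> ((a A B (P\<odot>Q) \<otimes> i (C\<odot>R)) \<cdot> (ai (A\<odot>B) (P\<odot>Q) (C\<odot>R) \<cdot> ((i (A\<odot>B) \<otimes> exch (P\<odot>Q) C R) \<cdot> a (A\<odot>B) C ((P\<odot>Q)\<odot>R))))))))"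
    by (simp add: asc_nat_comp_left in_context2[OF asc_nat_comp_left] del: interchange interchange_comp)
  also have "\<dots> = (ai A P ((B\<odot>Q)\<odot>(C\<odot>R)) \<cdot> ((i A \<otimes> a P (B\<odot>Q) (C\<odot>R)) \<cdot> ((i A \<otimes> (exch P B Q \<otimes> i (C\<odot>R))) \<cdot> ((i A \<otimes> ai B (P\<odot>Q) (C\<odot>R)) \<cdot> (a A B ((P\<odot>Q)\<odot>(C\<odot>R)) \<cdot> ((i (A\<odot>B) \<otimes> exch (P\<odot>Q) C R) \<cdot> a (A\<odot>B) C ((P\<odot>Q)\<odot>R)))))))"
    by (simp add: pentagon_asc_conj in_context3[OF pentagon_asc_conj] del: interchange interchange_comp)
  also have "\<dots> = (ai A P ((B\<odot>Q)\<odot>(C\<odot>R)) \<cdot> ((i A \<otimes> a P (B\<odot>Q) (C\<odot>R)) \<cdot> ((i A \<otimes> (exch P B Q \<otimes> i (C\<odot>R))) \<cdot> ((i A \<otimes> ai B (P\<odot>Q) (C\<odot>R)) \<cdot> ((i A \<otimes> (i B \<otimes> exch (P\<odot>Q) C R)) \<cdot> (a A B (C\<odot>((P\<odot>Q)\<odot>R)) \<cdot> a (A\<odot>B) C ((P\<odot>Q)\<odot>R)))))))"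
    by (simp add: asc_nat_right in_context2[OF asc_nat_right] del: interchange interchange_comp)
  also have "\<dots> = (ai A P ((B\<odot>Q)\<odot>(C\<odot>R)) \<cdot> ((i A \<otimes> (a P (B\<odot>Q) (C\<odot>R) \<cdot> ((exch P B Q \<otimes> i (C\<odot>R)) \<cdot> (ai B (P\<odot>Q) (C\<odot>R) \<cdot> ((i B \<otimes> exch (P\<odot>Q) C R) \<cdot> a B C ((P\<odot>Q)\<odot>R)))))) \<cdot> (a A (B\<odot>C) ((P\<odot>Q)\<odot>R) \<cdot> (a A B C \<otimes> i ((P\<odot>Q)\<odot>R)))))"
    by (simp add: pentagon in_context2[OF pentagon])
  also have "\<dots> = (ai A P ((B\<odot>Q)\<odot>(C\<odot>R)) \<cdot> ((i A \<otimes> ((i P \<otimes> ta B Q C R) \<cdot> (exch P (B\<odot>C) (Q\<odot>R) \<cdot> (i (B\<odot>C) \<otimes> a P Q R)))) \<cdot> (a A (B\<odot>C) ((P\<odot>Q)\<odot>R) \<cdot> (a A B C \<otimes> i ((P\<odot>Q)\<odot>R)))))"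
    by (simp only: exch_tau)
  also have "\<dots> = (ai A P ((B\<odot>Q)\<odot>(C\<odot>R)) \<cdot> ((i A \<otimes> (i P \<otimes> ta B Q C R)) \<cdot> ((i A \<otimes> exch P (B\<odot>C) (Q\<odot>R)) \<cdot> ((i A \<otimes> (i (B\<odot>C) \<otimes> a P Q R)) \<cdot> (a A (B\<odot>C) ((P\<odot>Q)\<odot>R) \<cdot> (a A B C \<otimes> i ((P\<odot>Q)\<odot>R)))))))"
    by simp
  also have "\<dots> = (ai A P ((B\<odot>Q)\<odot>(C\<odot>R)) \<cdot> ((i A \<otimes> (i P \<otimes> ta B Q C R)) \<cdot> ((i A \<otimes> exch P (B\<odot>C) (Q\<odot>R)) \<cdot> (a A (B\<odot>C) (P\<odot>(Q\<odot>R)) \<cdot> ((i (A\<odot>(B\<odot>C)) \<otimes> a P Q R) \<cdot> (a A B C \<otimes> i ((P\<odot>Q)\<odot>R)))))))"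
    by (simp add: in_context2[OF asc_nat_right] del: interchange interchange_comp)
  also have "\<dots> = (ai A P ((B\<odot>Q)\<odot>(C\<odot>R)) \<cdot> ((i A \<otimes> (i P \<otimes> ta B Q C R)) \<cdot> ((i A \<otimes> exch P (B\<odot>C) (Q\<odot>R)) \<cdot> (a A (B\<odot>C) (P\<odot>(Q\<odot>R)) \<cdot> (a A B C \<otimes> a P Q R)))))"
    by simp
  also have "\<dots> = ((i (A\<odot>P) \<otimes> ta B Q C R) \<cdot> (ta A P (B\<odot>C) (Q\<odot>R) \<cdot> (a A B C \<otimes> a P Q R)))"
    by (simp add: tau_exch asci_nat_right in_context2[OF asci_nat_right] del: interchange interchange_comp)
  finally show ?thesis .
qed

lemma tau_asc': "((i ((B1\<odot>B2)\<odot>B3) \<otimes> a X Y Z) \<cdot> (ta (B1\<odot>B2) B3 (X\<odot>Y) Z \<cdot> (ta B1 B2 X Y \<otimes> i (B3\<odot>Z)))) = ((ai B1 B2 B3 \<otimes> i (X\<odot>(Y\<odot>Z))) \<cdot> (ta B1 (B2\<odot>B3) X (Y\<odot>Z) \<cdot> ((i (B1\<odot>X) \<otimes> ta B2 B3 Y Z) \<cdot> a (B1\<odot>X) (B2\<odot>Y) (B3\<odot>Z))))"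
proof -
  have "((ta (B1\<odot>B2) B3 (X\<odot>Y) Z \<cdot> (ta B1 B2 X Y \<otimes> i (B3\<odot>Z))) \<cdot> ai (B1\<odot>X) (B2\<odot>Y) (B3\<odot>Z)) = (((ta (B1\<odot>B2) B3 (X\<odot>Y) Z \<cdot> (ta B1 B2 X Y \<otimes> i (B3\<odot>Z))) \<cdot> ai (B1\<odot>X) (B2\<odot>Y) (B3\<odot>Z))) \<cdot> (((i (B1\<odot>X) \<otimes> ta B2 Y B3 Z) \<cdot> (ta B1 X (B2\<odot>B3) (Y\<odot>Z) \<cdot> (a B1 B2 B3 \<otimes> a X Y Z))) \<cdot> ((ai B1 B2 B3 \<otimes> ai X Y Z) \<cdot> (ta B1 (B2\<odot>B3) X (Y\<odot>Z) \<cdot> (i (B1\<odot>X) \<otimes> ta B2 B3 Y Z))))"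
    by simp
  also have "\<dots> = (((ta (B1\<odot>B2) B3 (X\<odot>Y) Z \<cdot> (ta B1 B2 X Y \<otimes> i (B3\<odot>Z))) \<cdot> ai (B1\<odot>X) (B2\<odot>Y) (B3\<odot>Z))) \<cdot> ((a (B1\<odot>X) (B2\<odot>Y) (B3\<odot>Z) \<cdot> ((ta B1 X B2 Y \<otimes> i (B3\<odot>Z)) \<cdot> ta (B1\<odot>B2) (X\<odot>Y) B3 Z)) \<cdot> ((ai B1 B2 B3 \<otimes> ai X Y Z) \<cdot> (ta B1 (B2\<odot>B3) X (Y\<odot>Z) \<cdot> (i (B1\<odot>X) \<otimes> ta B2 B3 Y Z))))"
    by (simp only: tau_asc[symmetric])
  also have "\<dots> = ((ai B1 B2 B3 \<otimes> ai X Y Z) \<cdot> (ta B1 (B2\<odot>B3) X (Y\<odot>Z) \<cdot> (i (B1\<odot>X) \<otimes> ta B2 B3 Y Z)))"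
    by simp
  finally have tau_asc_rotated: "((ta (B1\<odot>B2) B3 (X\<odot>Y) Z \<cdot> (ta B1 B2 X Y \<otimes> i (B3\<odot>Z))) \<cdot> ai (B1\<odot>X) (B2\<odot>Y) (B3\<odot>Z)) = ((ai B1 B2 B3 \<otimes> ai X Y Z) \<cdot> (ta B1 (B2\<odot>B3) X (Y\<odot>Z) \<cdot> (i (B1\<odot>X) \<otimes> ta B2 B3 Y Z)))" .
  have "((i ((B1\<odot>B2)\<odot>B3) \<otimes> a X Y Z) \<cdot> (ta (B1\<odot>B2) B3 (X\<odot>Y) Z \<cdot> (ta B1 B2 X Y \<otimes> i (B3\<odot>Z)))) = (((i ((B1\<odot>B2)\<odot>B3) \<otimes> a X Y Z) \<cdot> ((ta (B1\<odot>B2) B3 (X\<odot>Y) Z \<cdot> (ta B1 B2 X Y \<otimes> i (B3\<odot>Z))) \<cdot> ai (B1\<odot>X) (B2\<odot>Y) (B3\<odot>Z)))) \<cdot> a (B1\<odot>X) (B2\<odot>Y) (B3\<odot>Z)"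
    by simp
  also have "\<dots> = ((ai B1 B2 B3 \<otimes> i (X\<odot>(Y\<odot>Z))) \<cdot> (ta B1 (B2\<odot>B3) X (Y\<odot>Z) \<cdot> ((i (B1\<odot>X) \<otimes> ta B2 B3 Y Z) \<cdot> a (B1\<odot>X) (B2\<odot>Y) (B3\<odot>Z))))"
    by (simp only: tau_asc_rotated) simp
  finally show ?thesis .
qed

lemma tau_ru: "ta A B K X \<cdot> (r A \<otimes> i (B\<odot>X)) = (i (A\<odot>B) \<otimes> l X) \<cdot> ai A B X"
  by (simp add: tau_exch triangle in_context2[OF triangle] lu_tensor_inv exch_def sy_unit_lu asci_nat')

lemma tau_sy: "(ta A B C D \<cdot> s (A\<odot>C) (B\<odot>D)) = ((s A B \<otimes> s C D) \<cdot> ta B A D C)"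
proof -
  have "(ta A B C D \<cdot> s (A\<odot>C) (B\<odot>D)) = (ai A B (C\<odot>D) \<cdot> ((i A \<otimes> exch B C D) \<cdot> (a A C (B\<odot>D) \<cdot> (exch (A\<odot>C) B D \<cdot> ((i B \<otimes> s (A\<odot>C) D) \<cdot> a B D (A\<odot>C))))))" by (simp add: tau_exch exch_sy[symmetric])
  also have "\<dots> = (ai A B (C\<odot>D) \<cdot> (exch A B (C\<odot>D) \<cdot> ((i B \<otimes> a A C D) \<cdot> ((i B \<otimes> s (A\<odot>C) D) \<cdot> a B D (A\<odot>C)))))" by (simp add: exch_tensor_left)
  also have "\<dots> = ((s A B \<otimes> i (C\<odot>D)) \<cdot> (ai B A (C\<odot>D) \<cdot> ((i B \<otimes> ((i A \<otimes> s C D) \<cdot> (a A D C \<cdot> ((s A D \<otimes> i C) \<cdot> ai D A C)))) \<cdot> a B D (A\<odot>C))))" by (simp add: exch_def sy_tensor_left)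
  also have "\<dots> = ((s A B \<otimes> i (C\<odot>D)) \<cdot> (ai B A (C\<odot>D) \<cdot> ((i B \<otimes> (i A \<otimes> s C D)) \<cdot> ((i B \<otimes> exch A D C) \<cdot> a B D (A\<odot>C)))))" by (simp add: exch_def)
  also have "\<dots> = ((s A B \<otimes> i (C\<odot>D)) \<cdot> ((i (B\<odot>A) \<otimes> s C D) \<cdot> (ai B A (D\<odot>C) \<cdot> ((i B \<otimes> exch A D C) \<cdot> a B D (A\<odot>C)))))" by (simp add: asci_nat' in_context2[OF asci_nat'] del: interchange interchange_comp)
  also have "\<dots> = ((s A B \<otimes> s C D) \<cdot> ta B A D C)" by (simp add: tau_exch)
  finally show ?thesis .
qed

lemma triangle_inv: "ai X K Y \<cdot> (i X \<otimes> l Y) = r X \<otimes> i Y"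
  by (simp flip: triangle)

lemma exch_unit_lu: "exch K X Y \<cdot> (i X \<otimes> l Y) = l (X\<odot>Y)"
  by (simp add: exch_def triangle_inv sy_unit_ru lu_tensor)

lemma tau_lu_lu: "(ta K K X Y \<cdot> (l X \<otimes> l Y)) = ((l K \<otimes> i (X\<odot>Y)) \<cdot> l (X\<odot>Y))"
proof -
  have "(ta K K X Y \<cdot> (l X \<otimes> l Y)) = (ai K K (X\<odot>Y) \<cdot> ((i K \<otimes> exch K X Y) \<cdot> (a K X (K\<odot>Y) \<cdot> ((l X \<otimes> i (K\<odot>Y)) \<cdot> (i X \<otimes> l Y)))))" by (simp add: tau_exch)
  also have "\<dots> = (ai K K (X\<odot>Y) \<cdot> ((i K \<otimes> exch K X Y) \<cdot> (l (X\<odot>(K\<odot>Y)) \<cdot> (i X \<otimes> l Y))))" by (simp add: in_context2[OF lu_tensor] del: interchange interchange_comp)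
  also have "\<dots> = (ai K K (X\<odot>Y) \<cdot> (l (K\<odot>(X\<odot>Y)) \<cdot> (exch K X Y \<cdot> (i X \<otimes> l Y))))" by (simp add: in_context2[OF lu_nat] del: interchange interchange_comp)
  also have "\<dots> = ((l K \<otimes> i (X\<odot>Y)) \<cdot> l (X\<odot>Y))" by (simp add: lu_tensor_inv_comp exch_unit_lu)
  finally show ?thesis .
qed

lemma tau_lui_lui: "li (X\<odot>Y) \<cdot> ((li K \<otimes> i (X\<odot>Y)) \<cdot> ta K K X Y) = li X \<otimes> li Y"
proof -
  have "li (X\<odot>Y) \<cdot> ((li K \<otimes> i (X\<odot>Y)) \<cdot> ta K K X Y) = li (X\<odot>Y) \<cdot> ((li K \<otimes> i (X\<odot>Y)) \<cdot> (ta K K X Y \<cdot> ((l X \<otimes> l Y) \<cdot> (li X \<otimes> li Y))))"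
    by simp
  also have "\<dots> = li X \<otimes> li Y" by (simp only: in_context2[OF tau_lu_lu]) simp
  finally show ?thesis .
qed

lemma tau_nat_right: "Ar h \<Longrightarrow> Ar k \<Longrightarrow> tg h = C' \<Longrightarrow> tg k = D' \<Longrightarrow>
  (i (A\<odot>B) \<otimes> (h \<otimes> k)) \<cdot> ta A B C' D' = ta A B (sr h) (sr k) \<cdot> ((i A \<otimes> h) \<otimes> (i B \<otimes> k))"
  using tau_nat[of "i A" "i B" h k A B C' D'] by simp

lemma tau_nat_left: "Ar f \<Longrightarrow> Ar g \<Longrightarrow> tg f = A' \<Longrightarrow> tg g = B' \<Longrightarrow>
  ((f \<otimes> g) \<otimes> i (C\<odot>D)) \<cdot> ta A' B' C D = ta (sr f) (sr g) C D \<cdot> ((f \<otimes> i C) \<otimes> (g \<otimes> i D))"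
  using tau_nat[of f g "i C" "i D" A' B' C D] by simp

lemma tau_nat_first: "Ar f \<Longrightarrow> sr f = A \<Longrightarrow>
  ta A B C D \<cdot> ((f \<otimes> i C) \<otimes> i (B\<odot>D)) = ((f \<otimes> i B) \<otimes> i (C\<odot>D)) \<cdot> ta (tg f) B C D"
  using tau_nat[of f "i B" "i C" "i D" "tg f" B C D] by simp

lemma tau_nat_second: "Ar g \<Longrightarrow> tg g = B' \<Longrightarrow>
  ((i A \<otimes> g) \<otimes> i (C\<odot>D)) \<cdot> ta A B' C D = ta A (sr g) C D \<cdot> (i (A\<odot>C) \<otimes> (g \<otimes> i D))"
  using tau_nat[of "i A" g "i C" "i D" A B' C D] by simp

lemma lui_nat: "Ar f \<Longrightarrow> tg f = B \<Longrightarrow> f \<cdot> li B = li (sr f) \<cdot> (i K \<otimes> f)"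
proof -
  assume H: "Ar f" "tg f = B"
  have "li (sr f) \<cdot> (i K \<otimes> f) = li (sr f) \<cdot> ((i K \<otimes> f) \<cdot> (l B \<cdot> li B))" using H by simp
  also have "\<dots> = f \<cdot> li B" using H by (simp only: in_context2[OF lu_nat]) simp
  finally show ?thesis by simp
qed

lemma tau_unit_sy: "ta X X Y K = (s X X \<otimes> s Y K) \<cdot> (ta X X K Y \<cdot> s (X\<odot>K) (X\<odot>Y))"
proof -
  have "(s X X \<otimes> s Y K) \<cdot> (ta X X K Y \<cdot> s (X\<odot>K) (X\<odot>Y)) = (s X X \<otimes> s Y K) \<cdot> ((s X X \<otimes> s K Y) \<cdot> ta X X Y K)"
    by (simp only: tau_sy)
  also have "\<dots> = ta X X Y K" by simp
  finally show ?thesis by simp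
qed

lemma asci_counits_rr: "Ar f \<Longrightarrow> Ar g \<Longrightarrow> Ar h \<Longrightarrow> sr f = X \<Longrightarrow> sr g = Y \<Longrightarrow> sr h = Z \<Longrightarrow> tg f = A \<Longrightarrow> tg g = K \<Longrightarrow> tg h = K \<Longrightarrow>
  ai X Y Z \<cdot> ((f \<otimes> ((g \<otimes> h) \<cdot> l K)) \<cdot> r A) = (((f \<otimes> g) \<cdot> r A) \<otimes> h) \<cdot> r A"
proof -
  assume H: "Ar f" "Ar g" "Ar h" "sr f = X" "sr g = Y" "sr h = Z" "tg f = A" "tg g = K" "tg h = K"
  have "ai X Y Z \<cdot> ((f \<otimes> ((g \<otimes> h) \<cdot> l K)) \<cdot> r A) = ai X Y Z \<cdot> ((f \<otimes> (g \<otimes> h)) \<cdot> ((i A \<otimes> l K) \<cdot> r A))"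
    using H by simp
  also have "\<dots> = ((f \<otimes> g) \<otimes> h) \<cdot> (ai A K K \<cdot> ((i A \<otimes> l K) \<cdot> r A))"
    using H by (simp add: in_context2[OF asci_nat'] del: interchange interchange_comp)
  also have "\<dots> = ((f \<otimes> g) \<otimes> h) \<cdot> ((r A \<otimes> i K) \<cdot> r A)"
    by (simp add: in_context2[OF triangle_inv] del: interchange interchange_comp)
  also have "\<dots> = (((f \<otimes> g) \<cdot> r A) \<otimes> h) \<cdot> r A"
    using H by simp
  finally show ?thesis .
qed

lemma asci_counits_lr: "Ar f \<Longrightarrow> Ar g \<Longrightarrow> Ar h \<Longrightarrow> sr f = X \<Longrightarrow> sr g = Y \<Longrightarrow> sr h = Z \<Longrightarrow> tg f = K \<Longrightarrow> tg g = A \<Longrightarrow> tg h = K \<Longrightarrow>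
  ai X Y Z \<cdot> ((f \<otimes> ((g \<otimes> h) \<cdot> r A)) \<cdot> l A) = (((f \<otimes> g) \<cdot> l A) \<otimes> h) \<cdot> r A"
proof -
  assume H: "Ar f" "Ar g" "Ar h" "sr f = X" "sr g = Y" "sr h = Z" "tg f = K" "tg g = A" "tg h = K"
  have "ai X Y Z \<cdot> ((f \<otimes> ((g \<otimes> h) \<cdot> r A)) \<cdot> l A) = ai X Y Z \<cdot> ((f \<otimes> (g \<otimes> h)) \<cdot> ((i K \<otimes> r A) \<cdot> l A))"
    using H by simp
  also have "\<dots> = ((f \<otimes> g) \<otimes> h) \<cdot> (ai K A K \<cdot> (l (A \<odot> K) \<cdot> r A))"
    using H by (simp add: in_context2[OF asci_nat'] lu_nat del: interchange interchange_comp)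
  also have "\<dots> = ((f \<otimes> g) \<otimes> h) \<cdot> ((l A \<otimes> i K) \<cdot> r A)"
    by (simp add: lu_tensor_inv_comp del: interchange interchange_comp)
  also have "\<dots> = (((f \<otimes> g) \<cdot> l A) \<otimes> h) \<cdot> r A"
    using H by simp
  finally show ?thesis .
qed

lemma asci_counits_ll: "Ar f \<Longrightarrow> Ar g \<Longrightarrow> Ar h \<Longrightarrow> sr f = X \<Longrightarrow> sr g = Y \<Longrightarrow> sr h = Z \<Longrightarrow> tg f = K \<Longrightarrow> tg g = K \<Longrightarrow> tg h = A \<Longrightarrow>
  ai X Y Z \<cdot> ((f \<otimes> ((g \<otimes> h) \<cdot> l A)) \<cdot> l A) = (((f \<otimes> g) \<cdot> l K) \<otimes> h) \<cdot> l A"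
proof -
  assume H: "Ar f" "Ar g" "Ar h" "sr f = X" "sr g = Y" "sr h = Z" "tg f = K" "tg g = K" "tg h = A"
  have "ai X Y Z \<cdot> ((f \<otimes> ((g \<otimes> h) \<cdot> l A)) \<cdot> l A) = ai X Y Z \<cdot> ((f \<otimes> (g \<otimes> h)) \<cdot> ((i K \<otimes> l A) \<cdot> l A))"
    using H by simp
  also have "\<dots> = ((f \<otimes> g) \<otimes> h) \<cdot> (ai K K A \<cdot> (l (K \<odot> A) \<cdot> l A))"
    using H by (simp add: in_context2[OF asci_nat'] lu_nat del: interchange interchange_comp)
  also have "\<dots> = ((f \<otimes> g) \<otimes> h) \<cdot> ((l K \<otimes> i A) \<cdot> l A)"
    by (simp add: lu_tensor_inv_comp del: interchange interchange_comp)
  also have "\<dots> = (((f \<otimes> g) \<cdot> l K) \<otimes> h) \<cdot> l A"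
    using H by simp
  finally show ?thesis .
qed
end

section \<open>Monoidal coalgebra modalities\<close>

locale coalgebra_modality = additive_smc S for S :: "('o,'m) smc" +
  fixes M :: "('o,'m) mcm"
  assumes mcm: "is_mcm S M"
begin

abbreviation b where "b X \<equiv> bng M X"
abbreviation \<delta> where "\<delta> X \<equiv> dl M X"
abbreviation \<epsilon> where "\<epsilon> X \<equiv> ep M X"
abbreviation m where "m X Y \<equiv> mm M X Y"
abbreviation mK where "mK \<equiv> mk M"
abbreviation \<Delta> where "\<Delta> X \<equiv> dt M X"
abbreviation e where "e X \<equiv> ce M X"

lemmas mcm_laws = mcm[unfolded is_mcm_def Let_def]

definition bb where "bb f = (if Ar f then bngm M f else z (b (sr f)) (b (tg f)))"

lemma bang_ty[simp]: "Ar (bb f)" "sr (bb f) = b (sr f)" "tg (bb f) = b (tg f)"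
  using mcm_laws by (auto simp: bb_def hom_iff)

lemma bngm_eq_bb: "Ar f \<Longrightarrow> bngm M f = bb f" by (simp add: bb_def)

lemma bang_idm[simp]: "bb (i A) = i (b A)"
  using mcm_laws by (simp add: bb_def)

lemma bang_comp: "Ar f \<Longrightarrow> Ar g \<Longrightarrow> tg f = sr g \<Longrightarrow> bb (f \<cdot> g) = bb f \<cdot> bb g"
  using mcm_laws by (simp add: hom_iff bngm_eq_bb tcomp_eq[symmetric])

lemma delta_eps_ty[simp]: "Ar (\<delta> A)" "sr (\<delta> A) = b A" "tg (\<delta> A) = b (b A)"
  "Ar (\<epsilon> A)" "sr (\<epsilon> A) = b A" "tg (\<epsilon> A) = A"
  using mcm_laws by (auto simp: hom_iff)

lemma delta_nat: "Ar f \<Longrightarrow> tg f = B \<Longrightarrow> bb f \<cdot> \<delta> B = \<delta> (sr f) \<cdot> bb (bb f)"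
  using mcm_laws by (simp add: hom_iff bngm_eq_bb cmp_eq_tcomp) metis

lemma eps_nat: "Ar f \<Longrightarrow> tg f = B \<Longrightarrow> bb f \<cdot> \<epsilon> B = \<epsilon> (sr f) \<cdot> f"
  using mcm_laws by (simp add: hom_iff bngm_eq_bb cmp_eq_tcomp) metis

lemma delta_coassoc: "\<delta> A \<cdot> \<delta> (b A) = \<delta> A \<cdot> bb (\<delta> A)"
  using mcm_laws by (simp add: bngm_eq_bb cmp_eq_tcomp)

lemma delta_eps[simp]: "\<delta> A \<cdot> \<epsilon> (b A) = i (b A)"
  using mcm_laws by (simp add: bngm_eq_bb cmp_eq_tcomp)

lemma delta_bang_eps[simp]: "\<delta> A \<cdot> bb (\<epsilon> A) = i (b A)"
  using mcm_laws by (simp add: bngm_eq_bb cmp_eq_tcomp)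

lemma m_ty[simp]: "Ar (m A B)" "sr (m A B) = b A \<odot> b B" "tg (m A B) = b (A \<odot> B)"
  "Ar mK" "sr mK = K" "tg mK = b K"
  using mcm_laws by (auto simp: hom_iff)

lemma m_nat: "Ar f \<Longrightarrow> Ar g \<Longrightarrow> tg f = B \<Longrightarrow> tg g = D \<Longrightarrow> (bb f \<otimes> bb g) \<cdot> m B D = m (sr f) (sr g) \<cdot> bb (f \<otimes> g)"
  using mcm_laws by (simp add: hom_iff bngm_eq_bb cmp_eq_tcomp tnsm_eq_ttensor) metis

lemma m_assoc: "(i (b A) \<otimes> m B C) \<cdot> (m A (B\<odot>C) \<cdot> bb (a A B C)) = a (b A) (b B) (b C) \<cdot> ((m A B \<otimes> i (b C)) \<cdot> m (A\<odot>B) C)"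
  using mcm_laws by (simp add: bngm_eq_bb cmp_eq_tcomp tnsm_eq_ttensor)

lemma m_lu: "(mK \<otimes> i (b A)) \<cdot> (m K A \<cdot> bb (l A)) = l (b A)"
  using mcm_laws by (simp add: bngm_eq_bb cmp_eq_tcomp tnsm_eq_ttensor)

lemma m_ru: "(i (b A) \<otimes> mK) \<cdot> (m A K \<cdot> bb (r A)) = r (b A)"
  using mcm_laws by (simp add: bngm_eq_bb cmp_eq_tcomp tnsm_eq_ttensor)

lemma m_sym: "s (b A) (b B) \<cdot> m B A = m A B \<cdot> bb (s A B)"
  using mcm_laws by (simp add: bngm_eq_bb cmp_eq_tcomp tnsm_eq_ttensor)

lemma delta_monoidal: "m A B \<cdot> \<delta> (A\<odot>B) = (\<delta> A \<otimes> \<delta> B) \<cdot> (m (b A) (b B) \<cdot> bb (m A B))"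
  using mcm_laws by (simp add: bngm_eq_bb cmp_eq_tcomp tnsm_eq_ttensor)

lemma delta_monoidal_unit: "mK \<cdot> \<delta> K = mK \<cdot> bb mK"
  using mcm_laws by (simp add: bngm_eq_bb cmp_eq_tcomp tnsm_eq_ttensor)

lemma eps_monoidal: "m A B \<cdot> \<epsilon> (A\<odot>B) = \<epsilon> A \<otimes> \<epsilon> B"
  using mcm_laws by (simp add: bngm_eq_bb cmp_eq_tcomp tnsm_eq_ttensor)

lemma eps_monoidal_unit[simp]: "mK \<cdot> \<epsilon> K = i K"
  using mcm_laws by (simp add: bngm_eq_bb cmp_eq_tcomp tnsm_eq_ttensor)

lemma comonoid_ty[simp]: "Ar (\<Delta> A)" "sr (\<Delta> A) = b A" "tg (\<Delta> A) = b A \<odot> b A"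
  "Ar (e A)" "sr (e A) = b A" "tg (e A) = K"
  using mcm_laws by (auto simp: hom_iff)

lemma Delta_nat: "Ar f \<Longrightarrow> tg f = B \<Longrightarrow> bb f \<cdot> \<Delta> B = \<Delta> (sr f) \<cdot> (bb f \<otimes> bb f)"
  using mcm_laws by (simp add: hom_iff bngm_eq_bb cmp_eq_tcomp tnsm_eq_ttensor) metis

lemma e_nat: "Ar f \<Longrightarrow> tg f = B \<Longrightarrow> bb f \<cdot> e B = e (sr f)"
  using mcm_laws by (simp add: hom_iff bngm_eq_bb cmp_eq_tcomp tnsm_eq_ttensor) metis

lemma Delta_coassoc: "\<Delta> A \<cdot> ((i (b A) \<otimes> \<Delta> A) \<cdot> a (b A) (b A) (b A)) = \<Delta> A \<cdot> (\<Delta> A \<otimes> i (b A))"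
  using mcm_laws by (simp add: bngm_eq_bb cmp_eq_tcomp tnsm_eq_ttensor)

lemma Delta_counit_left[simp]: "\<Delta> A \<cdot> ((e A \<otimes> i (b A)) \<cdot> l (b A)) = i (b A)"
  using mcm_laws by (simp add: bngm_eq_bb cmp_eq_tcomp tnsm_eq_ttensor)

lemma Delta_counit_right[simp]: "\<Delta> A \<cdot> ((i (b A) \<otimes> e A) \<cdot> r (b A)) = i (b A)"
  using mcm_laws by (simp add: bngm_eq_bb cmp_eq_tcomp tnsm_eq_ttensor)

lemma Delta_cocomm[simp]: "\<Delta> A \<cdot> s (b A) (b A) = \<Delta> A"
  using mcm_laws by (simp add: bngm_eq_bb cmp_eq_tcomp tnsm_eq_ttensor)

lemma delta_Delta: "\<delta> A \<cdot> \<Delta> (b A) = \<Delta> A \<cdot> (\<delta> A \<otimes> \<delta> A)"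
  using mcm_laws by (simp add: bngm_eq_bb cmp_eq_tcomp tnsm_eq_ttensor)

lemma delta_e[simp]: "\<delta> A \<cdot> e (b A) = e A"
  using mcm_laws by (simp add: bngm_eq_bb cmp_eq_tcomp tnsm_eq_ttensor)

lemma Delta_monoidal: "m A B \<cdot> \<Delta> (A\<odot>B) = (\<Delta> A \<otimes> \<Delta> B) \<cdot> (ta (b A) (b A) (b B) (b B) \<cdot> (m A B \<otimes> m A B))"
  using mcm_laws by (simp add: bngm_eq_bb cmp_eq_tcomp tnsm_eq_ttensor)

lemma Delta_monoidal_unit: "mK \<cdot> \<Delta> K = li K \<cdot> (mK \<otimes> mK)"
  using mcm_laws by (simp add: bngm_eq_bb cmp_eq_tcomp tnsm_eq_ttensor)

lemma e_monoidal: "m A B \<cdot> e (A\<odot>B) = (e A \<otimes> e B) \<cdot> l K"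
  using mcm_laws by (simp add: bngm_eq_bb cmp_eq_tcomp tnsm_eq_ttensor)

lemma e_monoidal_unit[simp]: "mK \<cdot> e K = i K"
  using mcm_laws by (simp add: bngm_eq_bb cmp_eq_tcomp tnsm_eq_ttensor)

lemma Delta_coalgebra_morphism: "\<Delta> A \<cdot> ((\<delta> A \<otimes> \<delta> A) \<cdot> m (b A) (b A)) = \<delta> A \<cdot> bb (\<Delta> A)"
  using mcm_laws by (simp add: bngm_eq_bb cmp_eq_tcomp tnsm_eq_ttensor)

lemma e_coalgebra_morphism: "e A \<cdot> mK = \<delta> A \<cdot> bb (e A)"
  using mcm_laws by (simp add: bngm_eq_bb cmp_eq_tcomp tnsm_eq_ttensor)

section \<open>The bimonoid structure of !A\<close>

definition phi where "phi A = ((\<epsilon> A \<otimes> e A) \<cdot> r A) \<oplus> ((e A \<otimes> \<epsilon> A) \<cdot> l A)"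

definition nab where "nab A = (\<delta> A \<otimes> \<delta> A) \<cdot> (m (b A) (b A) \<cdot> bb (phi A))"

definition u where "u A = mK \<cdot> bb (z K A)"

lemma phi_ty[simp]: "Ar (phi A)" "sr (phi A) = b A \<odot> b A" "tg (phi A) = A"
  by (simp_all add: phi_def)

lemma nab_ty[simp]: "Ar (nab A)" "sr (nab A) = b A \<odot> b A" "tg (nab A) = b A"
  by (simp_all add: nab_def)

lemma u_ty[simp]: "Ar (u A)" "sr (u A) = K" "tg (u A) = b A"
  by (simp_all add: u_def)

lemma nabla_eq_nab: "nabla S M A = nab A"
  by (simp add: nabla_def nab_def phi_def cmp_eq_tcomp tnsm_eq_ttensor pls_eq_tplus bngm_eq_bb)

lemma uu_eq_u: "uu S M A = u A"
  by (simp add: uu_def u_def cmp_eq_tcomp bngm_eq_bb)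

lemma u_counit[simp]: "u A \<cdot> e A = i K"
  by (simp add: u_def e_nat)

lemma u_eps: "u A \<cdot> \<epsilon> A = z K A"
  by (simp add: u_def eps_nat)

lemma u_coalgebra_morphism: "u A \<cdot> \<delta> A = mK \<cdot> bb (u A)"
  by (simp add: u_def in_context2[OF delta_nat] delta_nat delta_monoidal_unit in_context2[OF delta_monoidal_unit] bang_comp)

lemma u_comult: "u A \<cdot> \<Delta> A = li K \<cdot> (u A \<otimes> u A)"
  by (simp add: u_def Delta_nat in_context2[OF Delta_nat] in_context2[OF Delta_monoidal_unit])

lemma nab_eps: "nab A \<cdot> \<epsilon> A = phi A"
  by (simp add: nab_def eps_nat in_context2[OF eps_monoidal] eps_monoidal)

lemma nab_counit: "nab A \<cdot> e A = (e A \<otimes> e A) \<cdot> l K"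
  by (simp add: nab_def e_nat in_context2[OF e_monoidal] e_monoidal)

lemma nab_coalgebra_morphism: "nab A \<cdot> \<delta> A = (\<delta> A \<otimes> \<delta> A) \<cdot> (m (b A) (b A) \<cdot> bb (nab A))"
proof -
  have "nab A \<cdot> \<delta> A = (\<delta> A \<otimes> \<delta> A) \<cdot> (m (b A) (b A) \<cdot> (\<delta> (b A \<odot> b A) \<cdot> bb (bb (phi A))))"
    by (simp add: nab_def delta_nat)
  also have "\<dots> = (\<delta> A \<otimes> \<delta> A) \<cdot> ((\<delta> (b A) \<otimes> \<delta> (b A)) \<cdot> (m (b (b A)) (b (b A)) \<cdot> (bb (m (b A) (b A)) \<cdot> bb (bb (phi A)))))"
    by (simp only: in_context2[OF delta_monoidal] tcomp_assoc)
  also have "\<dots> = ((\<delta> A \<cdot> bb (\<delta> A)) \<otimes> (\<delta> A \<cdot> bb (\<delta> A))) \<cdot> (m (b (b A)) (b (b A)) \<cdot> (bb (m (b A) (b A)) \<cdot> bb (bb (phi A))))"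
    by (simp add: delta_coassoc)
  also have "\<dots> = (\<delta> A \<otimes> \<delta> A) \<cdot> ((bb (\<delta> A) \<otimes> bb (\<delta> A)) \<cdot> (m (b (b A)) (b (b A)) \<cdot> (bb (m (b A) (b A)) \<cdot> bb (bb (phi A)))))"
    by simp
  also have "\<dots> = (\<delta> A \<otimes> \<delta> A) \<cdot> (m (b A) (b A) \<cdot> (bb (\<delta> A \<otimes> \<delta> A) \<cdot> (bb (m (b A) (b A)) \<cdot> bb (bb (phi A)))))"
    by (simp only: in_context2[OF m_nat] delta_eps_ty tcomp_assoc)
  also have "\<dots> = (\<delta> A \<otimes> \<delta> A) \<cdot> (m (b A) (b A) \<cdot> bb (nab A))"
    by (simp add: nab_def bang_comp)
  finally show ?thesis .
qed

lemma u_phi_left: "(u A \<otimes> i (b A)) \<cdot> phi A = l (b A) \<cdot> \<epsilon> A"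
  by (simp add: phi_def tcomp_tplus_right u_eps lu_nat tplus_zero_left)

lemma u_phi_right: "(i (b A) \<otimes> u A) \<cdot> phi A = r (b A) \<cdot> \<epsilon> A"
  by (simp add: phi_def tcomp_tplus_right u_eps ru_nat tplus_zero_right)

lemma m_lu_comp: "Ar x \<Longrightarrow> sr x = b A \<Longrightarrow> (mK \<otimes> i (b A)) \<cdot> (m K A \<cdot> (bb (l A) \<cdot> x)) = l (b A) \<cdot> x"
  by (simp add: in_context3[OF m_lu])

lemma m_ru_comp: "Ar x \<Longrightarrow> sr x = b A \<Longrightarrow> (i (b A) \<otimes> mK) \<cdot> (m A K \<cdot> (bb (r A) \<cdot> x)) = r (b A) \<cdot> x"
  by (simp add: in_context3[OF m_ru])

lemma nab_unit_left: "(u A \<otimes> i (b A)) \<cdot> nab A = l (b A)"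
proof -
  have "(u A \<otimes> i (b A)) \<cdot> nab A = ((mK \<cdot> bb (u A)) \<otimes> \<delta> A) \<cdot> (m (b A) (b A) \<cdot> bb (phi A))"
    by (simp add: nab_def u_coalgebra_morphism)
  also have "\<dots> = (mK \<otimes> \<delta> A) \<cdot> ((bb (u A) \<otimes> bb (i (b A))) \<cdot> (m (b A) (b A) \<cdot> bb (phi A)))"
    by simp
  also have "\<dots> = (mK \<otimes> \<delta> A) \<cdot> (m K (b A) \<cdot> (bb (u A \<otimes> i (b A)) \<cdot> bb (phi A)))"
    by (simp only: in_context2[OF m_nat] u_ty idm_ty tcomp_assoc)
  also have "\<dots> = (mK \<otimes> \<delta> A) \<cdot> (m K (b A) \<cdot> (bb (l (b A)) \<cdot> bb (\<epsilon> A)))"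
    by (simp add: bang_comp[symmetric] u_phi_left)
  also have "\<dots> = (i K \<otimes> \<delta> A) \<cdot> ((mK \<otimes> i (b (b A))) \<cdot> (m K (b A) \<cdot> (bb (l (b A)) \<cdot> bb (\<epsilon> A))))"
    by simp
  also have "\<dots> = l (b A)"
    by (simp add: m_lu_comp in_context2[OF lu_nat] del: interchange interchange_comp)
  finally show ?thesis .
qed

lemma nab_unit_right: "(i (b A) \<otimes> u A) \<cdot> nab A = r (b A)"
proof -
  have "(i (b A) \<otimes> u A) \<cdot> nab A = (\<delta> A \<otimes> (mK \<cdot> bb (u A))) \<cdot> (m (b A) (b A) \<cdot> bb (phi A))"
    by (simp add: nab_def u_coalgebra_morphism)
  also have "\<dots> = (\<delta> A \<otimes> mK) \<cdot> ((bb (i (b A)) \<otimes> bb (u A)) \<cdot> (m (b A) (b A) \<cdot> bb (phi A)))"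
    by simp
  also have "\<dots> = (\<delta> A \<otimes> mK) \<cdot> (m (b A) K \<cdot> (bb (i (b A) \<otimes> u A) \<cdot> bb (phi A)))"
    by (simp only: in_context2[OF m_nat] u_ty idm_ty tcomp_assoc)
  also have "\<dots> = (\<delta> A \<otimes> mK) \<cdot> (m (b A) K \<cdot> (bb (r (b A)) \<cdot> bb (\<epsilon> A)))"
    by (simp add: bang_comp[symmetric] u_phi_right)
  also have "\<dots> = (\<delta> A \<otimes> i K) \<cdot> ((i (b (b A)) \<otimes> mK) \<cdot> (m (b A) K \<cdot> (bb (r (b A)) \<cdot> bb (\<epsilon> A))))"
    by simp
  also have "\<dots> = r (b A)"
    by (simp add: m_ru_comp in_context2[OF ru_nat] del: interchange interchange_comp)
  finally show ?thesis .
qed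

lemma phi_assoc: "ai (b A) (b A) (b A) \<cdot> ((i (b A) \<otimes> nab A) \<cdot> phi A) = (nab A \<otimes> i (b A)) \<cdot> phi A"
proof -
  \<comment> \<open>One summand for each of the three tensor factors on which \<open>\<epsilon>\<close> acts.\<close>
  let ?T1 = "(((\<epsilon> A \<otimes> e A) \<cdot> r A) \<otimes> e A) \<cdot> r A"
  let ?T2 = "(((e A \<otimes> \<epsilon> A) \<cdot> l A) \<otimes> e A) \<cdot> r A"
  let ?T3 = "(((e A \<otimes> e A) \<cdot> l K) \<otimes> \<epsilon> A) \<cdot> l A"
  have L: "ai (b A) (b A) (b A) \<cdot> ((i (b A) \<otimes> nab A) \<cdot> phi A) = ?T1 \<oplus> (?T2 \<oplus> ?T3)"
    by (simp add: phi_def tcomp_tplus_right tcomp_tplus_left ttensor_tplus_left ttensor_tplus_right nab_eps nab_counit asci_counits_rr asci_counits_lr asci_counits_ll)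
  have R: "(nab A \<otimes> i (b A)) \<cdot> phi A = (?T1 \<oplus> ?T2) \<oplus> ?T3"
    by (simp add: phi_def tcomp_tplus_right tcomp_tplus_left ttensor_tplus_left ttensor_tplus_right nab_eps nab_counit)
  show ?thesis using L R by (simp add: tplus_assoc)
qed

lemma m_assoc_comp: "Ar x \<Longrightarrow> sr x = b (A\<odot>(B\<odot>C)) \<Longrightarrow> (i (b A) \<otimes> m B C) \<cdot> (m A (B\<odot>C) \<cdot> x) = a (b A) (b B) (b C) \<cdot> ((m A B \<otimes> i (b C)) \<cdot> (m (A\<odot>B) C \<cdot> (bb (ai A B C) \<cdot> x)))"
proof -
  assume H: "Ar x" "sr x = b (A\<odot>(B\<odot>C))"
  have "(i (b A) \<otimes> m B C) \<cdot> (m A (B\<odot>C) \<cdot> x) = (i (b A) \<otimes> m B C) \<cdot> (m A (B\<odot>C) \<cdot> (bb (a A B C \<cdot> ai A B C) \<cdot> x))"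
    using H by (simp del: ttensor_idm)
  also have "\<dots> = (i (b A) \<otimes> m B C) \<cdot> (m A (B\<odot>C) \<cdot> (bb (a A B C) \<cdot> (bb (ai A B C) \<cdot> x)))"
    by (simp only: bang_comp asc_ty tcomp_assoc)
  also have "\<dots> = a (b A) (b B) (b C) \<cdot> ((m A B \<otimes> i (b C)) \<cdot> (m (A\<odot>B) C \<cdot> (bb (ai A B C) \<cdot> x)))"
    by (simp only: in_context3[OF m_assoc] tcomp_assoc)
  finally show ?thesis .
qed

lemma nab_assoc: "((i (b A) \<otimes> nab A) \<cdot> nab A) = (a (b A) (b A) (b A) \<cdot> ((nab A \<otimes> i (b A)) \<cdot> nab A))"
proof -
  have "((i (b A) \<otimes> nab A) \<cdot> nab A) = ((\<delta> A \<otimes> (nab A \<cdot> \<delta> A)) \<cdot> (m (b A) (b A) \<cdot> bb (phi A)))" by (simp add: nab_def)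
  also have "\<dots> = ((\<delta> A \<otimes> ((\<delta> A \<otimes> \<delta> A) \<cdot> (m (b A) (b A) \<cdot> bb (nab A)))) \<cdot> (m (b A) (b A) \<cdot> bb (phi A)))" by (simp only: nab_coalgebra_morphism)
  also have "\<dots> = ((\<delta> A \<otimes> ((\<delta> A \<otimes> \<delta> A) \<cdot> m (b A) (b A))) \<cdot> ((bb (i (b A)) \<otimes> bb (nab A)) \<cdot> (m (b A) (b A) \<cdot> bb (phi A))))" by simp
  also have "\<dots> = ((\<delta> A \<otimes> ((\<delta> A \<otimes> \<delta> A) \<cdot> m (b A) (b A))) \<cdot> (m (b A) ((b A)\<odot>(b A)) \<cdot> (bb ((i (b A) \<otimes> nab A)) \<cdot> bb (phi A))))" by (simp only: in_context2[OF m_nat] idm_ty nab_ty tcomp_assoc)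
  also have "\<dots> = ((\<delta> A \<otimes> (\<delta> A \<otimes> \<delta> A)) \<cdot> ((i (b (b A)) \<otimes> m (b A) (b A)) \<cdot> (m (b A) ((b A)\<odot>(b A)) \<cdot> bb (((i (b A) \<otimes> nab A) \<cdot> phi A)))))" by (simp add: bang_comp)
  also have "\<dots> = ((\<delta> A \<otimes> (\<delta> A \<otimes> \<delta> A)) \<cdot> (a (b (b A)) (b (b A)) (b (b A)) \<cdot> ((m (b A) (b A) \<otimes> i (b (b A))) \<cdot> (m ((b A)\<odot>(b A)) (b A) \<cdot> bb ((ai (b A) (b A) (b A) \<cdot> ((i (b A) \<otimes> nab A) \<cdot> phi A)))))))" by (simp add: m_assoc_comp bang_comp del: interchange interchange_comp)
  also have "\<dots> = ((\<delta> A \<otimes> (\<delta> A \<otimes> \<delta> A)) \<cdot> (a (b (b A)) (b (b A)) (b (b A)) \<cdot> ((m (b A) (b A) \<otimes> i (b (b A))) \<cdot> (m ((b A)\<odot>(b A)) (b A) \<cdot> bb (((nab A \<otimes> i (b A)) \<cdot> phi A))))))" by (simp only: phi_assoc)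
  also have "\<dots> = (a (b A) (b A) (b A) \<cdot> (((\<delta> A \<otimes> \<delta> A) \<otimes> \<delta> A) \<cdot> ((m (b A) (b A) \<otimes> i (b (b A))) \<cdot> (m ((b A)\<odot>(b A)) (b A) \<cdot> bb (((nab A \<otimes> i (b A)) \<cdot> phi A))))))" by (simp add: asc_nat' in_context2[OF asc_nat'] del: interchange interchange_comp)
  also have "\<dots> = (a (b A) (b A) (b A) \<cdot> ((((\<delta> A \<otimes> \<delta> A) \<cdot> m (b A) (b A)) \<otimes> \<delta> A) \<cdot> (m ((b A)\<odot>(b A)) (b A) \<cdot> (bb ((nab A \<otimes> i (b A))) \<cdot> bb (phi A)))))" by (simp add: bang_comp)
  also have "\<dots> = (a (b A) (b A) (b A) \<cdot> ((((\<delta> A \<otimes> \<delta> A) \<cdot> m (b A) (b A)) \<otimes> \<delta> A) \<cdot> ((bb (nab A) \<otimes> bb (i (b A))) \<cdot> (m (b A) (b A) \<cdot> bb (phi A)))))" by (simp only: in_context2[OF m_nat] idm_ty nab_ty tcomp_assoc)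
  also have "\<dots> = (a (b A) (b A) (b A) \<cdot> ((((\<delta> A \<otimes> \<delta> A) \<cdot> (m (b A) (b A) \<cdot> bb (nab A))) \<otimes> \<delta> A) \<cdot> (m (b A) (b A) \<cdot> bb (phi A))))" by simp
  also have "\<dots> = (a (b A) (b A) (b A) \<cdot> (((nab A \<cdot> \<delta> A) \<otimes> \<delta> A) \<cdot> (m (b A) (b A) \<cdot> bb (phi A))))" by (simp only: nab_coalgebra_morphism)
  also have "\<dots> = (a (b A) (b A) (b A) \<cdot> ((nab A \<otimes> i (b A)) \<cdot> nab A))" by (simp add: nab_def)
  finally show ?thesis .
qed

lemma nab_comult: "nab A \<cdot> \<Delta> A = (\<Delta> A \<otimes> \<Delta> A) \<cdot> (ta (b A) (b A) (b A) (b A) \<cdot> (nab A \<otimes> nab A))"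
proof -
  let ?X = "b A" and ?Y = "b (b A)"
  have "nab A \<cdot> \<Delta> A = ((\<Delta> A \<cdot> (\<delta> A \<otimes> \<delta> A)) \<otimes> (\<Delta> A \<cdot> (\<delta> A \<otimes> \<delta> A))) \<cdot> (ta ?Y ?Y ?Y ?Y \<cdot> ((m ?X ?X \<cdot> bb (phi A)) \<otimes> (m ?X ?X \<cdot> bb (phi A))))"
    by (simp add: nab_def Delta_nat in_context2[OF Delta_monoidal] delta_Delta)
  also have "\<dots> = (\<Delta> A \<otimes> \<Delta> A) \<cdot> (((\<delta> A \<otimes> \<delta> A) \<otimes> (\<delta> A \<otimes> \<delta> A)) \<cdot> (ta ?Y ?Y ?Y ?Y \<cdot> ((m ?X ?X \<cdot> bb (phi A)) \<otimes> (m ?X ?X \<cdot> bb (phi A)))))"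
    by simp
  also have "\<dots> = (\<Delta> A \<otimes> \<Delta> A) \<cdot> (ta ?X ?X ?X ?X \<cdot> (((\<delta> A \<otimes> \<delta> A) \<otimes> (\<delta> A \<otimes> \<delta> A)) \<cdot> ((m ?X ?X \<cdot> bb (phi A)) \<otimes> (m ?X ?X \<cdot> bb (phi A)))))"
    by (simp add: in_context2[OF tau_nat] del: interchange interchange_comp)
  also have "\<dots> = (\<Delta> A \<otimes> \<Delta> A) \<cdot> (ta ?X ?X ?X ?X \<cdot> (nab A \<otimes> nab A))"
    by (simp add: nab_def)
  finally show ?thesis .
qed

lemma m_nat': "Ar f \<Longrightarrow> Ar g \<Longrightarrow> sr f = A \<Longrightarrow> sr g = C \<Longrightarrow> m A C \<cdot> bb (f \<otimes> g) = (bb f \<otimes> bb g) \<cdot> m (tg f) (tg g)"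
  using m_nat by metis

lemma m_asci: "(m A B \<otimes> i (b C)) \<cdot> (m (A\<odot>B) C \<cdot> bb (ai A B C)) = ai (b A) (b B) (b C) \<cdot> ((i (b A) \<otimes> m B C) \<cdot> m A (B\<odot>C))"
proof -
  have "ai (b A) (b B) (b C) \<cdot> ((i (b A) \<otimes> m B C) \<cdot> m A (B\<odot>C)) = ai (b A) (b B) (b C) \<cdot> ((i (b A) \<otimes> m B C) \<cdot> (m A (B\<odot>C) \<cdot> i (b (A\<odot>(B\<odot>C)))))"
    by simp
  also have "\<dots> = (m A B \<otimes> i (b C)) \<cdot> (m (A\<odot>B) C \<cdot> bb (ai A B C))"
    by (simp only: m_assoc_comp idm_ty asc_inv_comp tcomp_assoc) simp
  finally show ?thesis by simp
qed

lemma m_asci_comp: "(m A B \<otimes> i (b C)) \<cdot> (m (A\<odot>B) C \<cdot> (bb (ai A B C) \<cdot> x)) = ai (b A) (b B) (b C) \<cdot> ((i (b A) \<otimes> m B C) \<cdot> (m A (B\<odot>C) \<cdot> x))"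
  by (simp only: in_context3[OF m_asci] tcomp_assoc)

lemma m_exch: "exch (b A) (b B) (b C) \<cdot> ((i (b B) \<otimes> m A C) \<cdot> m B (A\<odot>C)) = (i (b A) \<otimes> m B C) \<cdot> (m A (B\<odot>C) \<cdot> bb (exch A B C))"
proof -
  have "(i (b A) \<otimes> m B C) \<cdot> (m A (B\<odot>C) \<cdot> bb (exch A B C)) = (i (b A) \<otimes> m B C) \<cdot> (m A (B\<odot>C) \<cdot> (bb (a A B C) \<cdot> (bb (s A B \<otimes> i C) \<cdot> bb (ai B A C))))"
    by (simp add: exch_def bang_comp)
  also have "\<dots> = a (b A) (b B) (b C) \<cdot> ((m A B \<otimes> i (b C)) \<cdot> (m (A\<odot>B) C \<cdot> (bb (s A B \<otimes> i C) \<cdot> bb (ai B A C))))"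
    by (simp only: in_context3[OF m_assoc] tcomp_assoc)
  also have "\<dots> = a (b A) (b B) (b C) \<cdot> ((m A B \<otimes> i (b C)) \<cdot> ((bb (s A B) \<otimes> bb (i C)) \<cdot> (m (B\<odot>A) C \<cdot> bb (ai B A C))))"
    by (simp only: in_context2[OF m_nat'] sy_ty idm_ty tcomp_assoc)
  also have "\<dots> = a (b A) (b B) (b C) \<cdot> ((s (b A) (b B) \<otimes> i (b C)) \<cdot> ((m B A \<otimes> i (b C)) \<cdot> (m (B\<odot>A) C \<cdot> bb (ai B A C))))"
    by (simp add: m_sym[symmetric])
  also have "\<dots> = a (b A) (b B) (b C) \<cdot> ((s (b A) (b B) \<otimes> i (b C)) \<cdot> (ai (b B) (b A) (b C) \<cdot> ((i (b B) \<otimes> m A C) \<cdot> m B (A\<odot>C))))"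
    by (simp only: m_asci)
  also have "\<dots> = exch (b A) (b B) (b C) \<cdot> ((i (b B) \<otimes> m A C) \<cdot> m B (A\<odot>C))"
    by (simp add: exch_def)
  finally show ?thesis by simp
qed

lemma m_tau: "(ta (b A) (b B) (b C) (b D) \<cdot> ((m A C \<otimes> m B D) \<cdot> m (A\<odot>C) (B\<odot>D))) = ((m A B \<otimes> m C D) \<cdot> (m (A\<odot>B) (C\<odot>D) \<cdot> bb (ta A B C D)))"
proof -
  have "(ta (b A) (b B) (b C) (b D) \<cdot> ((m A C \<otimes> m B D) \<cdot> m (A\<odot>C) (B\<odot>D))) = (ai (b A) (b B) ((b C)\<odot>(b D)) \<cdot> ((i (b A) \<otimes> exch (b B) (b C) (b D)) \<cdot> (a (b A) (b C) ((b B)\<odot>(b D)) \<cdot> ((i ((b A)\<odot>(b C)) \<otimes> m B D) \<cdot> ((m A C \<otimes> i (b (B\<odot>D))) \<cdot> m (A\<odot>C) (B\<odot>D))))))" by (simp add: tau_exch)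
  also have "\<dots> = (ai (b A) (b B) ((b C)\<odot>(b D)) \<cdot> ((i (b A) \<otimes> exch (b B) (b C) (b D)) \<cdot> ((i (b A) \<otimes> (i (b C) \<otimes> m B D)) \<cdot> (a (b A) (b C) (b (B\<odot>D)) \<cdot> ((m A C \<otimes> i (b (B\<odot>D))) \<cdot> m (A\<odot>C) (B\<odot>D))))))" by (simp add: in_context2[OF asc_nat_right] del: interchange interchange_comp)
  also have "\<dots> = (ai (b A) (b B) ((b C)\<odot>(b D)) \<cdot> ((i (b A) \<otimes> exch (b B) (b C) (b D)) \<cdot> ((i (b A) \<otimes> (i (b C) \<otimes> m B D)) \<cdot> ((i (b A) \<otimes> m C (B\<odot>D)) \<cdot> (m A (C\<odot>(B\<odot>D)) \<cdot> bb (a A C (B\<odot>D)))))))" by (simp only: m_assoc[symmetric])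
  also have "\<dots> = (ai (b A) (b B) ((b C)\<odot>(b D)) \<cdot> ((i (b A) \<otimes> (exch (b B) (b C) (b D) \<cdot> ((i (b C) \<otimes> m B D) \<cdot> m C (B\<odot>D)))) \<cdot> (m A (C\<odot>(B\<odot>D)) \<cdot> bb (a A C (B\<odot>D)))))" by simp
  also have "\<dots> = (ai (b A) (b B) ((b C)\<odot>(b D)) \<cdot> ((i (b A) \<otimes> ((i (b B) \<otimes> m C D) \<cdot> (m B (C\<odot>D) \<cdot> bb (exch B C D)))) \<cdot> (m A (C\<odot>(B\<odot>D)) \<cdot> bb (a A C (B\<odot>D)))))" by (simp only: m_exch)
  also have "\<dots> = (ai (b A) (b B) ((b C)\<odot>(b D)) \<cdot> ((i (b A) \<otimes> (i (b B) \<otimes> m C D)) \<cdot> ((i (b A) \<otimes> m B (C\<odot>D)) \<cdot> ((bb (i A) \<otimes> bb (exch B C D)) \<cdot> (m A (C\<odot>(B\<odot>D)) \<cdot> bb (a A C (B\<odot>D)))))))" by simp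
  also have "\<dots> = (ai (b A) (b B) ((b C)\<odot>(b D)) \<cdot> ((i (b A) \<otimes> (i (b B) \<otimes> m C D)) \<cdot> ((i (b A) \<otimes> m B (C\<odot>D)) \<cdot> (m A (B\<odot>(C\<odot>D)) \<cdot> (bb ((i A \<otimes> exch B C D)) \<cdot> bb (a A C (B\<odot>D)))))))" by (simp only: in_context2[OF m_nat] idm_ty exch_ty tcomp_assoc)
  also have "\<dots> = ((i ((b A)\<odot>(b B)) \<otimes> m C D) \<cdot> (ai (b A) (b B) (b (C\<odot>D)) \<cdot> ((i (b A) \<otimes> m B (C\<odot>D)) \<cdot> (m A (B\<odot>(C\<odot>D)) \<cdot> (bb ((i A \<otimes> exch B C D)) \<cdot> bb (a A C (B\<odot>D)))))))" by (simp add: in_context2[OF asci_nat'] del: interchange interchange_comp)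
  also have "\<dots> = ((i ((b A)\<odot>(b B)) \<otimes> m C D) \<cdot> ((m A B \<otimes> i (b (C\<odot>D))) \<cdot> (m (A\<odot>B) (C\<odot>D) \<cdot> (bb (ai A B (C\<odot>D)) \<cdot> (bb ((i A \<otimes> exch B C D)) \<cdot> bb (a A C (B\<odot>D)))))))" by (simp only: m_asci_comp)
  also have "\<dots> = ((m A B \<otimes> m C D) \<cdot> (m (A\<odot>B) (C\<odot>D) \<cdot> bb (ta A B C D)))" by (simp add: tau_exch bang_comp)
  finally show ?thesis .
qed

lemma Delta_coassoc': "\<Delta> A \<cdot> ((\<Delta> A \<otimes> i (b A)) \<cdot> ai (b A) (b A) (b A)) = \<Delta> A \<cdot> (i (b A) \<otimes> \<Delta> A)"
proof -
  have "\<Delta> A \<cdot> (i (b A) \<otimes> \<Delta> A) = \<Delta> A \<cdot> ((i (b A) \<otimes> \<Delta> A) \<cdot> (a (b A) (b A) (b A) \<cdot> ai (b A) (b A) (b A)))"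
    by simp
  also have "\<dots> = \<Delta> A \<cdot> ((\<Delta> A \<otimes> i (b A)) \<cdot> ai (b A) (b A) (b A))"
    by (simp only: in_context3[OF Delta_coassoc] tcomp_assoc)
  finally show ?thesis by simp
qed

lemma m_lui: "li (b Y) \<cdot> ((mK \<otimes> i (b Y)) \<cdot> m K Y) = bb (li Y)"
proof -
  have "li (b Y) \<cdot> ((mK \<otimes> i (b Y)) \<cdot> m K Y) = li (b Y) \<cdot> ((mK \<otimes> i (b Y)) \<cdot> (m K Y \<cdot> (bb (l Y) \<cdot> bb (li Y))))"
    by (simp flip: bang_comp)
  also have "\<dots> = bb (li Y)" by (simp only: m_lu_comp bang_ty lu_ty) simp
  finally show ?thesis .
qed
section \<open>The monad !A \<otimes> - and its lifting\<close>

abbreviation MU where "MU A Y \<equiv> a (b A) (b A) Y \<cdot> (nab A \<otimes> i Y)"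
abbreviation ETA where "ETA A Y \<equiv> li Y \<cdot> (u A \<otimes> i Y)"
abbreviation NN where "NN A Y Z \<equiv> (\<Delta> A \<otimes> i (Y\<odot>Z)) \<cdot> ta (b A) (b A) Y Z"
abbreviation NK where "NK A \<equiv> r (b A) \<cdot> e A"
abbreviation LAM where "LAM A Y \<equiv> (\<delta> A \<otimes> i (b Y)) \<cdot> m (b A) Y"

lemma mu_nat: "Ar f \<Longrightarrow> (i (b A) \<otimes> (i (b A) \<otimes> f)) \<cdot> MU A (tg f) = MU A (sr f) \<cdot> (i (b A) \<otimes> f)"
  by (simp add: in_context2[OF asc_nat])

lemma eta_nat: "Ar f \<Longrightarrow> f \<cdot> ETA A (tg f) = ETA A (sr f) \<cdot> (i (b A) \<otimes> f)"
  by (simp add: in_context2[OF lui_nat])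

lemma mu_assoc: "MU A (b A \<odot> Y) \<cdot> MU A Y = (i (b A) \<otimes> MU A Y) \<cdot> MU A Y"
proof -
  let ?X = "b A"
  have "MU A (?X \<odot> Y) \<cdot> MU A Y = a ?X ?X (?X\<odot>Y) \<cdot> (a (?X\<odot>?X) ?X Y \<cdot> (((nab A \<otimes> i ?X) \<otimes> i Y) \<cdot> (nab A \<otimes> i Y)))"
    by (simp add: in_context2[OF asc_nat_left] del: interchange interchange_comp)
  also have "\<dots> = (i ?X \<otimes> a ?X ?X Y) \<cdot> (a ?X (?X\<odot>?X) Y \<cdot> ((a ?X ?X ?X \<otimes> i Y) \<cdot> (((nab A \<otimes> i ?X) \<otimes> i Y) \<cdot> (nab A \<otimes> i Y))))"
    by (simp add: in_context2[OF pentagon] del: interchange interchange_comp)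
  also have "\<dots> = (i ?X \<otimes> a ?X ?X Y) \<cdot> (a ?X (?X\<odot>?X) Y \<cdot> (((i ?X \<otimes> nab A) \<cdot> nab A) \<otimes> i Y))"
    by (simp add: nab_assoc[symmetric])
  also have "\<dots> = (i ?X \<otimes> MU A Y) \<cdot> MU A Y"
    by (simp add: asc_nat_comp_left in_context2[OF asc_nat_comp_left])
  finally show ?thesis .
qed

lemma eta_mu: "ETA A (b A \<odot> Y) \<cdot> MU A Y = i (b A \<odot> Y)"
  by (simp add: in_context2[OF asc_nat_left] nab_unit_left lu_tensor del: ttensor_idm)

lemma T_eta_mu: "(i (b A) \<otimes> ETA A Y) \<cdot> MU A Y = i (b A \<odot> Y)"
proof -
  let ?X = "b A"
  have "(i ?X \<otimes> ETA A Y) \<cdot> MU A Y = (i ?X \<otimes> li Y) \<cdot> ((i ?X \<otimes> (u A \<otimes> i Y)) \<cdot> (a ?X ?X Y \<cdot> (nab A \<otimes> i Y)))"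
    by simp
  also have "\<dots> = (i ?X \<otimes> li Y) \<cdot> (a ?X K Y \<cdot> (((i ?X \<otimes> u A) \<otimes> i Y) \<cdot> (nab A \<otimes> i Y)))"
    by (simp add: in_context2[OF asc_nat] del: interchange interchange_comp)
  also have "\<dots> = i (?X \<odot> Y)"
    by (simp add: nab_unit_right triangle)
  finally show ?thesis .
qed

lemma nn_nat: "Ar f \<Longrightarrow> Ar g \<Longrightarrow> (i (b A) \<otimes> (f \<otimes> g)) \<cdot> NN A (tg f) (tg g) = NN A (sr f) (sr g) \<cdot> ((i (b A) \<otimes> f) \<otimes> (i (b A) \<otimes> g))"
proof -
  assume H: "Ar f" "Ar g"
  let ?X = "b A"
  have "(i ?X \<otimes> (f \<otimes> g)) \<cdot> NN A (tg f) (tg g) = (\<Delta> A \<otimes> i (sr f \<odot> sr g)) \<cdot> ((i (?X\<odot>?X) \<otimes> (f \<otimes> g)) \<cdot> ta ?X ?X (tg f) (tg g))"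
    using H by simp
  also have "\<dots> = NN A (sr f) (sr g) \<cdot> ((i ?X \<otimes> f) \<otimes> (i ?X \<otimes> g))"
    using H by (simp add: tau_nat_right del: interchange interchange_comp)
  finally show ?thesis .
qed

lemma nn_lu: "NN A K Y \<cdot> ((NK A \<otimes> i (b A \<odot> Y)) \<cdot> l (b A \<odot> Y)) = i (b A) \<otimes> l Y"
proof -
  let ?X = "b A"
  have "NN A K Y \<cdot> ((NK A \<otimes> i (?X \<odot> Y)) \<cdot> l (?X \<odot> Y)) = (\<Delta> A \<otimes> i (K\<odot>Y)) \<cdot> (ta ?X ?X K Y \<cdot> ((r ?X \<otimes> i (?X\<odot>Y)) \<cdot> ((e A \<otimes> i (?X\<odot>Y)) \<cdot> l (?X\<odot>Y))))"
    by simp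
  also have "\<dots> = (\<Delta> A \<otimes> i (K\<odot>Y)) \<cdot> ((i (?X\<odot>?X) \<otimes> l Y) \<cdot> (ai ?X ?X Y \<cdot> ((e A \<otimes> i (?X\<odot>Y)) \<cdot> l (?X\<odot>Y))))"
    by (simp add: in_context2[OF tau_ru] del: interchange interchange_comp)
  also have "\<dots> = (\<Delta> A \<otimes> i (K\<odot>Y)) \<cdot> ((i (?X\<odot>?X) \<otimes> l Y) \<cdot> (((e A \<otimes> i ?X) \<otimes> i Y) \<cdot> (ai K ?X Y \<cdot> l (?X\<odot>Y))))"
    by (simp add: in_context2[OF asci_nat_left] del: interchange interchange_comp)
  also have "\<dots> = i ?X \<otimes> l Y"
    by (simp add: lu_tensor_inv)
  finally show ?thesis .
qed

lemma nn_ru: "NN A Y K \<cdot> ((i (b A \<odot> Y) \<otimes> NK A) \<cdot> r (b A \<odot> Y)) = i (b A) \<otimes> r Y"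
proof -
  \<comment> \<open>Reduced to \<open>nn_lu\<close> by the symmetry of \<open>\<tau>\<close> and cocommutativity of \<open>\<Delta>\<close>.\<close>
  let ?X = "b A"
  have "NN A Y K \<cdot> ((i (?X \<odot> Y) \<otimes> NK A) \<cdot> r (?X \<odot> Y)) = (\<Delta> A \<otimes> i (Y\<odot>K)) \<cdot> ((s ?X ?X \<otimes> s Y K) \<cdot> (ta ?X ?X K Y \<cdot> (s (?X\<odot>K) (?X\<odot>Y) \<cdot> ((i (?X\<odot>Y) \<otimes> (r ?X \<cdot> e A)) \<cdot> r (?X\<odot>Y)))))"
    by (simp only: tau_unit_sy tcomp_assoc)
  also have "\<dots> = (i ?X \<otimes> s Y K) \<cdot> ((\<Delta> A \<otimes> i (K\<odot>Y)) \<cdot> (ta ?X ?X K Y \<cdot> (((r ?X \<cdot> e A) \<otimes> i (?X\<odot>Y)) \<cdot> (s K (?X\<odot>Y) \<cdot> r (?X\<odot>Y)))))"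
    by (simp add: in_context2[OF sy_nat'])
  also have "\<dots> = (i ?X \<otimes> s Y K) \<cdot> (i ?X \<otimes> l Y)"
    using nn_lu by (simp add: sy_unit_ru del: interchange interchange_comp)
  also have "\<dots> = i ?X \<otimes> r Y"
    by (simp add: sy_unit_lu)
  finally show ?thesis .
qed

lemma nn_sy: "NN A Y Z \<cdot> s (b A\<odot>Y) (b A\<odot>Z) = (i (b A) \<otimes> s Y Z) \<cdot> NN A Z Y"
  by (simp add: tau_sy)

lemma mu_nk: "MU A K \<cdot> NK A = (i (b A) \<otimes> NK A) \<cdot> NK A"
proof -
  let ?X = "b A"
  have L: "MU A K \<cdot> NK A = (i ?X \<otimes> r ?X) \<cdot> ((e A \<otimes> e A) \<cdot> l K)"
    by (simp add: ru_nat in_context2[OF ru_nat] in_context2[OF ru_tensor] nab_counit)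
  have R: "(i ?X \<otimes> NK A) \<cdot> NK A = (i ?X \<otimes> r ?X) \<cdot> ((i ?X \<otimes> e A) \<cdot> ((e A \<otimes> i K) \<cdot> r K))"
    by (simp add: ru_nat)
  have "(i ?X \<otimes> r ?X) \<cdot> ((i ?X \<otimes> e A) \<cdot> ((e A \<otimes> i K) \<cdot> r K)) = (i ?X \<otimes> r ?X) \<cdot> ((e A \<otimes> e A) \<cdot> l K)"
    by (simp add: lu_unit_eq_ru_unit)
  then show ?thesis using L R by simp
qed

lemma eta_nn: "ETA A (Y\<odot>Z) \<cdot> NN A Y Z = ETA A Y \<otimes> ETA A Z"
proof -
  have "ETA A (Y\<odot>Z) \<cdot> NN A Y Z = li (Y\<odot>Z) \<cdot> ((li K \<otimes> i (Y\<odot>Z)) \<cdot> (((u A \<otimes> u A) \<otimes> i (Y\<odot>Z)) \<cdot> ta (b A) (b A) Y Z))"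
    by (simp add: u_comult)
  also have "\<dots> = li (Y\<odot>Z) \<cdot> ((li K \<otimes> i (Y\<odot>Z)) \<cdot> (ta K K Y Z \<cdot> ((u A \<otimes> i Y) \<otimes> (u A \<otimes> i Z))))"
    by (simp add: tau_nat_left del: interchange interchange_comp)
  also have "\<dots> = ETA A Y \<otimes> ETA A Z"
    by (simp add: in_context3[OF tau_lui_lui] del: interchange interchange_comp) simp
  finally show ?thesis .
qed

lemma eta_nk: "ETA A K \<cdot> NK A = i K"
  by (simp add: in_context2[OF ru_nat] lu_unit_eq_ru_unit[symmetric])

lemma nn_asc: "(i (b A) \<otimes> a Y1 Y2 Y3) \<cdot> (NN A (Y1\<odot>Y2) Y3 \<cdot> (NN A Y1 Y2 \<otimes> i (b A \<odot> Y3))) =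
   NN A Y1 (Y2\<odot>Y3) \<cdot> ((i (b A \<odot> Y1) \<otimes> NN A Y2 Y3) \<cdot> a (b A \<odot> Y1) (b A \<odot> Y2) (b A \<odot> Y3))"
proof -
  let ?X = "b A"
  let ?W = "Y1\<odot>(Y2\<odot>Y3)"
  have "(i ?X \<otimes> a Y1 Y2 Y3) \<cdot> (NN A (Y1\<odot>Y2) Y3 \<cdot> (NN A Y1 Y2 \<otimes> i (?X \<odot> Y3))) =
     (\<Delta> A \<otimes> a Y1 Y2 Y3) \<cdot> (ta ?X ?X (Y1\<odot>Y2) Y3 \<cdot> (((\<Delta> A \<otimes> i (Y1\<odot>Y2)) \<otimes> i (?X\<odot>Y3)) \<cdot> (ta ?X ?X Y1 Y2 \<otimes> i (?X\<odot>Y3))))"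
    by simp
  also have "\<dots> = (\<Delta> A \<otimes> a Y1 Y2 Y3) \<cdot> (((\<Delta> A \<otimes> i ?X) \<otimes> i ((Y1\<odot>Y2)\<odot>Y3)) \<cdot> (ta (?X\<odot>?X) ?X (Y1\<odot>Y2) Y3 \<cdot> (ta ?X ?X Y1 Y2 \<otimes> i (?X\<odot>Y3))))"
    by (simp add: in_context2[OF tau_nat_first] del: interchange interchange_comp)
  also have "\<dots> = ((\<Delta> A \<cdot> (\<Delta> A \<otimes> i ?X)) \<otimes> i ?W) \<cdot> ((i ((?X\<odot>?X)\<odot>?X) \<otimes> a Y1 Y2 Y3) \<cdot> (ta (?X\<odot>?X) ?X (Y1\<odot>Y2) Y3 \<cdot> (ta ?X ?X Y1 Y2 \<otimes> i (?X\<odot>Y3))))"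
    by simp
  also have "\<dots> = ((\<Delta> A \<cdot> (\<Delta> A \<otimes> i ?X)) \<otimes> i ?W) \<cdot> ((ai ?X ?X ?X \<otimes> i ?W) \<cdot> (ta ?X (?X\<odot>?X) Y1 (Y2\<odot>Y3) \<cdot> ((i (?X\<odot>Y1) \<otimes> ta ?X ?X Y2 Y3) \<cdot> a (?X\<odot>Y1) (?X\<odot>Y2) (?X\<odot>Y3))))"
    by (simp only: tau_asc')
  also have "\<dots> = (\<Delta> A \<otimes> i ?W) \<cdot> (((i ?X \<otimes> \<Delta> A) \<otimes> i ?W) \<cdot> (ta ?X (?X\<odot>?X) Y1 (Y2\<odot>Y3) \<cdot> ((i (?X\<odot>Y1) \<otimes> ta ?X ?X Y2 Y3) \<cdot> a (?X\<odot>Y1) (?X\<odot>Y2) (?X\<odot>Y3))))"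
    by (simp add: Delta_coassoc')
  also have "\<dots> = (\<Delta> A \<otimes> i ?W) \<cdot> (ta ?X ?X Y1 (Y2\<odot>Y3) \<cdot> ((i (?X\<odot>Y1) \<otimes> (\<Delta> A \<otimes> i (Y2\<odot>Y3))) \<cdot> ((i (?X\<odot>Y1) \<otimes> ta ?X ?X Y2 Y3) \<cdot> a (?X\<odot>Y1) (?X\<odot>Y2) (?X\<odot>Y3))))"
    by (simp add: in_context2[OF tau_nat_second] del: interchange interchange_comp)
  also have "\<dots> = NN A Y1 (Y2\<odot>Y3) \<cdot> ((i (?X \<odot> Y1) \<otimes> NN A Y2 Y3) \<cdot> a (?X \<odot> Y1) (?X \<odot> Y2) (?X \<odot> Y3))"
    by simp
  finally show ?thesis .
qed

lemma mu_nn: "MU A (Y\<odot>Z) \<cdot> NN A Y Z = (i (b A) \<otimes> NN A Y Z) \<cdot> (NN A (b A\<odot>Y) (b A\<odot>Z) \<cdot> (MU A Y \<otimes> MU A Z))"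
proof -
  let ?X = "b A"
  have "MU A (Y\<odot>Z) \<cdot> NN A Y Z = a ?X ?X (Y\<odot>Z) \<cdot> (((\<Delta> A \<otimes> \<Delta> A) \<otimes> i (Y\<odot>Z)) \<cdot> ((ta ?X ?X ?X ?X \<otimes> i (Y\<odot>Z)) \<cdot> (((nab A \<otimes> nab A) \<otimes> i (Y\<odot>Z)) \<cdot> ta ?X ?X Y Z)))"
    by (simp add: nab_comult)
  also have "\<dots> = a ?X ?X (Y\<odot>Z) \<cdot> (((\<Delta> A \<otimes> \<Delta> A) \<otimes> i (Y\<odot>Z)) \<cdot> ((ta ?X ?X ?X ?X \<otimes> i (Y\<odot>Z)) \<cdot> (ta (?X\<odot>?X) (?X\<odot>?X) Y Z \<cdot> ((nab A \<otimes> i Y) \<otimes> (nab A \<otimes> i Z)))))"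
    by (simp add: tau_nat_left in_context2[OF tau_nat_left] del: interchange interchange_comp)
  also have "\<dots> = (\<Delta> A \<otimes> (\<Delta> A \<otimes> i (Y\<odot>Z))) \<cdot> (a (?X\<odot>?X) (?X\<odot>?X) (Y\<odot>Z) \<cdot> ((ta ?X ?X ?X ?X \<otimes> i (Y\<odot>Z)) \<cdot> (ta (?X\<odot>?X) (?X\<odot>?X) Y Z \<cdot> ((nab A \<otimes> i Y) \<otimes> (nab A \<otimes> i Z)))))"
    by (simp add: in_context2[OF asc_nat'] del: interchange interchange_comp)
  also have "\<dots> = (\<Delta> A \<otimes> (\<Delta> A \<otimes> i (Y\<odot>Z))) \<cdot> ((i (?X\<odot>?X) \<otimes> ta ?X ?X Y Z) \<cdot> (ta ?X ?X (?X\<odot>Y) (?X\<odot>Z) \<cdot> ((a ?X ?X Y \<otimes> a ?X ?X Z) \<cdot> ((nab A \<otimes> i Y) \<otimes> (nab A \<otimes> i Z)))))"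
    by (simp only: in_context3[OF tau_asc] tcomp_assoc)
  also have "\<dots> = (i ?X \<otimes> NN A Y Z) \<cdot> (NN A (?X\<odot>Y) (?X\<odot>Z) \<cdot> (MU A Y \<otimes> MU A Z))"
    by simp
  finally show ?thesis .
qed

lemma lam_nat: "Ar f \<Longrightarrow> (i (b A) \<otimes> bb f) \<cdot> LAM A (tg f) = LAM A (sr f) \<cdot> bb (i (b A) \<otimes> f)"
  by (simp add: in_context2[OF m_nat'] m_nat')

lemma mu_lam: "MU A (b Y) \<cdot> LAM A Y = (i (b A) \<otimes> LAM A Y) \<cdot> (LAM A (b A \<odot> Y) \<cdot> bb (MU A Y))"
proof -
  let ?X = "b A"
  have "MU A (b Y) \<cdot> LAM A Y = a ?X ?X (b Y) \<cdot> ((((\<delta> A \<otimes> \<delta> A) \<cdot> (m ?X ?X \<cdot> bb (nab A))) \<otimes> i (b Y)) \<cdot> m ?X Y)"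
    by (simp add: nab_coalgebra_morphism)
  also have "\<dots> = a ?X ?X (b Y) \<cdot> (((\<delta> A \<otimes> \<delta> A) \<otimes> i (b Y)) \<cdot> ((m ?X ?X \<otimes> i (b Y)) \<cdot> ((bb (nab A) \<otimes> bb (i Y)) \<cdot> m ?X Y)))"
    by simp
  also have "\<dots> = a ?X ?X (b Y) \<cdot> (((\<delta> A \<otimes> \<delta> A) \<otimes> i (b Y)) \<cdot> ((m ?X ?X \<otimes> i (b Y)) \<cdot> (m (?X\<odot>?X) Y \<cdot> bb (nab A \<otimes> i Y))))"
    by (simp only: m_nat in_context2[OF m_nat] nab_ty idm_ty tcomp_assoc)
  also have "\<dots> = (\<delta> A \<otimes> (\<delta> A \<otimes> i (b Y))) \<cdot> (a (b ?X) (b ?X) (b Y) \<cdot> ((m ?X ?X \<otimes> i (b Y)) \<cdot> (m (?X\<odot>?X) Y \<cdot> bb (nab A \<otimes> i Y))))"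
    by (simp add: in_context2[OF asc_nat'] del: interchange interchange_comp)
  also have "\<dots> = (\<delta> A \<otimes> (\<delta> A \<otimes> i (b Y))) \<cdot> ((i (b ?X) \<otimes> m ?X Y) \<cdot> (m ?X (?X\<odot>Y) \<cdot> (bb (a ?X ?X Y) \<cdot> bb (nab A \<otimes> i Y))))"
    by (simp only: in_context3[OF m_assoc] tcomp_assoc)
  also have "\<dots> = (i ?X \<otimes> LAM A Y) \<cdot> (LAM A (?X \<odot> Y) \<cdot> bb (MU A Y))"
    by (simp add: bang_comp)
  finally show ?thesis .
qed

lemma eta_lam: "ETA A (b Y) \<cdot> LAM A Y = bb (ETA A Y)"
proof -
  have "ETA A (b Y) \<cdot> LAM A Y = li (b Y) \<cdot> ((mK \<otimes> i (b Y)) \<cdot> ((bb (u A) \<otimes> bb (i Y)) \<cdot> m (b A) Y))"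
    by (simp add: u_coalgebra_morphism)
  also have "\<dots> = li (b Y) \<cdot> ((mK \<otimes> i (b Y)) \<cdot> (m K Y \<cdot> bb (u A \<otimes> i Y)))"
    by (simp only: m_nat in_context2[OF m_nat] u_ty idm_ty tcomp_assoc)
  also have "\<dots> = bb (ETA A Y)"
    by (simp add: in_context3[OF m_lui] bang_comp del: interchange interchange_comp)
  finally show ?thesis .
qed

lemma delta_lam: "(i (b A) \<otimes> \<delta> Y) \<cdot> (LAM A (b Y) \<cdot> bb (LAM A Y)) = LAM A Y \<cdot> \<delta> (b A \<odot> Y)"
  by (simp add: delta_monoidal in_context2[OF delta_monoidal] delta_coassoc bang_comp in_context2[OF m_nat'] m_nat')

lemma lam_eps: "LAM A Y \<cdot> \<epsilon> (b A \<odot> Y) = i (b A) \<otimes> \<epsilon> Y"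
  by (simp add: eps_monoidal in_context2[OF eps_monoidal])

lemma lam_m: "NN A (b Y) (b Z) \<cdot> ((LAM A Y \<otimes> LAM A Z) \<cdot> m (b A \<odot> Y) (b A \<odot> Z)) =
   (i (b A) \<otimes> m Y Z) \<cdot> (LAM A (Y\<odot>Z) \<cdot> bb (NN A Y Z))"
proof -
  let ?X = "b A"
  have "NN A (b Y) (b Z) \<cdot> ((LAM A Y \<otimes> LAM A Z) \<cdot> m (?X \<odot> Y) (?X \<odot> Z)) =
     (\<Delta> A \<otimes> i (b Y \<odot> b Z)) \<cdot> (ta ?X ?X (b Y) (b Z) \<cdot> (((\<delta> A \<otimes> i (b Y)) \<otimes> (\<delta> A \<otimes> i (b Z))) \<cdot> ((m ?X Y \<otimes> m ?X Z) \<cdot> m (?X\<odot>Y) (?X\<odot>Z))))"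
    by simp
  also have "\<dots> = (\<Delta> A \<otimes> i (b Y \<odot> b Z)) \<cdot> (((\<delta> A \<otimes> \<delta> A) \<otimes> i (b Y \<odot> b Z)) \<cdot> (ta (b ?X) (b ?X) (b Y) (b Z) \<cdot> ((m ?X Y \<otimes> m ?X Z) \<cdot> m (?X\<odot>Y) (?X\<odot>Z))))"
    by (simp add: in_context2[OF tau_nat'] del: interchange interchange_comp)
  also have "\<dots> = (\<Delta> A \<otimes> i (b Y \<odot> b Z)) \<cdot> (((\<delta> A \<otimes> \<delta> A) \<otimes> i (b Y \<odot> b Z)) \<cdot> ((m ?X ?X \<otimes> m Y Z) \<cdot> (m (?X\<odot>?X) (Y\<odot>Z) \<cdot> bb (ta ?X ?X Y Z))))"
    by (simp only: m_tau)
  also have "\<dots> = ((\<delta> A \<cdot> bb (\<Delta> A)) \<otimes> m Y Z) \<cdot> (m (?X\<odot>?X) (Y\<odot>Z) \<cdot> bb (ta ?X ?X Y Z))"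
    by (simp add: Delta_coalgebra_morphism)
  also have "\<dots> = (\<delta> A \<otimes> m Y Z) \<cdot> ((bb (\<Delta> A) \<otimes> bb (i (Y\<odot>Z))) \<cdot> (m (?X\<odot>?X) (Y\<odot>Z) \<cdot> bb (ta ?X ?X Y Z)))"
    by simp
  also have "\<dots> = (\<delta> A \<otimes> m Y Z) \<cdot> (m ?X (Y\<odot>Z) \<cdot> (bb (\<Delta> A \<otimes> i (Y\<odot>Z)) \<cdot> bb (ta ?X ?X Y Z)))"
    by (simp only: in_context2[OF m_nat] comonoid_ty idm_ty tcomp_assoc)
  also have "\<dots> = (i ?X \<otimes> m Y Z) \<cdot> (LAM A (Y\<odot>Z) \<cdot> bb (NN A Y Z))"
    by (simp add: bang_comp)
  finally show ?thesis .
qed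

lemma lam_mK: "NK A \<cdot> mK = (i (b A) \<otimes> mK) \<cdot> (LAM A K \<cdot> bb (NK A))"
proof -
  let ?X = "b A"
  have "(i ?X \<otimes> mK) \<cdot> (LAM A K \<cdot> bb (NK A)) = (\<delta> A \<otimes> i K) \<cdot> ((i (b ?X) \<otimes> mK) \<cdot> (m ?X K \<cdot> (bb (r ?X) \<cdot> bb (e A))))"
    by (simp add: bang_comp)
  also have "\<dots> = (\<delta> A \<otimes> i K) \<cdot> (r (b ?X) \<cdot> bb (e A))"
    by (simp add: m_ru_comp del: interchange interchange_comp)
  also have "\<dots> = NK A \<cdot> mK"
    by (simp add: in_context2[OF ru_nat] e_coalgebra_morphism)
  finally show ?thesis by simp
qed

lemma bang_monad_simps: "To (bang_monad S M A) X = b A \<odot> X"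
  "Tm (bang_monad S M A) f = tnsm S (i (b A)) f"
  "mu (bang_monad S M A) X = a (b A) (b A) X \<bullet> tnsm S (nabla S M A) (i X)"
  "eta (bang_monad S M A) X = li X \<bullet> tnsm S (uu S M A) (i X)"
  "nn (bang_monad S M A) X Y = tnsm S (\<Delta> A) (i (X \<odot> Y)) \<bullet> ta (b A) (b A) X Y"
  "nk (bang_monad S M A) = r (b A) \<bullet> e A"
  "lam (bang_monad S M A) X = tnsm S (\<delta> A) (i (b X)) \<bullet> m (b A) X"
  by (simp_all add: bang_monad_def)

lemmas bang_monad_unfold = hom_iff cmp_eq_tcomp tnsm_eq_ttensor bngm_eq_bb nabla_eq_nab uu_eq_u bang_monad_simps

lemma bang_monad_sym_comonoidal: "is_sym_comonoidal_monad S (bang_monad S M A)"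
  unfolding is_sym_comonoidal_monad_def Let_def
  using mu_nat eta_nat mu_assoc eta_mu T_eta_mu nn_nat nn_asc nn_lu nn_ru nn_sy
    mu_nn mu_nk eta_nn eta_nk
  by (intro conjI allI impI) (clarsimp simp: bang_monad_unfold)+

lemma bang_monad_exp_lifting: "is_exp_lifting_monad S M (bang_monad S M A)"
  unfolding is_exp_lifting_monad_def Let_def
  using lam_nat mu_lam eta_lam delta_lam lam_eps lam_m lam_mK
  by (intro conjI allI impI bang_monad_sym_comonoidal) (clarsimp simp: bang_monad_unfold)+

end

theorem proposition7p5:
  fixes S :: "('o,'m) smc" and M :: "('o,'m) mcm" and A :: 'o
  assumes "is_additive_smc S"
      and "is_mcm S M"
  shows "is_exp_lifting_monad S M (bang_monad S M A)"
proof -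
  interpret coalgebra_modality S M
    by (intro coalgebra_modality.intro additive_smc.intro coalgebra_modality_axioms.intro assms)
  show ?thesis by (rule bang_monad_exp_lifting)
qed

end
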